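(* In the setting below, for nonzero $F_1,\dots,F_n\in K_w[\mathcal G\oplus\mathcal H]$, $$\mathop{\mathrm{Res}}_{\mathbf x}F_1^{-1}\cdots F_n^{-1}J(F_1,\dots,F_n)=j(F_1,\dots,F_n),$$ equivalently $\mathop{\mathrm{CT}}_{\mathbf x}LJ(F_1,\dots,F_n)=j(F_1,\dots,F_n)$.
   Context: $K$ a field; $\mathcal G\oplus\mathcal H$ a totally ordered abelian group with $\mathcal H\cong\mathbb Z^n$, $x_i=t^{\epsilon_i}$ for a basis $\epsilon_1,\dots,\epsilon_n$ of $\mathcal H$; $K_w[\mathcal G\oplus\mathcal H]$ is the field of Malcev–Neumann series (formal series with well-ordered support), elements written $\sum_{\mathbf k}b_{\mathbf k}\mathbf x^{\mathbf k}$ with $b_{\mathbf k}\in K_w[\mathcal G]$; the $x$-initial term is the nonzero $b_{\mathbf k}\mathbf x^{\mathbf k}$ of least order. Partial derivatives act termwise, $\mathop{\mathrm{CT}}_{\mathbf x}$ and $\mathop{\mathrm{Res}}_{\mathbf x}$ extract $b_{\mathbf 0}$ and $b_{(-1,\dots,-1)}$. $J=\det(\partial F_i/\partial x_j)$, $LJ=\frac{x_1\cdots x_n}{F_1\cdots F_n}J$, and $j(F_1,\dots,F_n)=\det(b_{ij})$ where $a_ix_1^{b_{i1}}\cdots x_n^{b_{in}}$ is the $x$-initial term of $F_i$. *)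

theory Defs
  imports "Jordan_Normal_Form.Determinant" "HOL-Combinatorics.Permutations"
begin

(* The totally ordered abelian group G (+) H is modelled as a linearly ordered
   abelian group type 'a; G is a subgroup, eps 0..eps (n-1) are the basis of H,
   and every element decomposes uniquely as g + sum k_i eps_i. *)

definition zmult :: "int \<Rightarrow> 'a::ab_group_add \<Rightarrow> 'a" where
  "zmult k a = (if 0 \<le> k then (\<Sum>_<nat k. a) else - (\<Sum>_<nat (-k). a))"

definition exps :: "nat \<Rightarrow> (nat \<Rightarrow> int) set" where
  "exps n = {k. \<forall>i\<ge>n. k i = 0}"

definition hvec :: "nat \<Rightarrow> (nat \<Rightarrow> 'a::ab_group_add) \<Rightarrow> (nat \<Rightarrow> int) \<Rightarrow> 'a" where
  "hvec n eps k = (\<Sum>i<n. zmult (k i) (eps i))"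

definition direct_sum_decomp :: "'a::ab_group_add set \<Rightarrow> nat \<Rightarrow> (nat \<Rightarrow> 'a) \<Rightarrow> bool" where
  "direct_sum_decomp G n eps \<longleftrightarrow>
     0 \<in> G \<and> (\<forall>a\<in>G. \<forall>b\<in>G. a + b \<in> G) \<and> (\<forall>a\<in>G. - a \<in> G) \<and>
     (\<forall>\<gamma>. \<exists>!p. fst p \<in> G \<and> snd p \<in> exps n \<and> \<gamma> = fst p + hvec n eps (snd p))"

definition xdeg :: "'a::ab_group_add set \<Rightarrow> nat \<Rightarrow> (nat \<Rightarrow> 'a) \<Rightarrow> 'a \<Rightarrow> (nat \<Rightarrow> int)" where
  "xdeg G n eps \<gamma> = snd (THE p. fst p \<in> G \<and> snd p \<in> exps n \<and> \<gamma> = fst p + hvec n eps (snd p))"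

definition is_MN :: "('a::linorder \<Rightarrow> 'k::zero) \<Rightarrow> bool" where
  "is_MN f \<longleftrightarrow> (\<forall>S \<subseteq> {\<gamma>. f \<gamma> \<noteq> 0}. S \<noteq> {} \<longrightarrow> (\<exists>m\<in>S. \<forall>s\<in>S. m \<le> s))"

definition mn_mult :: "('a::ab_group_add \<Rightarrow> 'k::comm_ring_1) \<Rightarrow> ('a \<Rightarrow> 'k) \<Rightarrow> 'a \<Rightarrow> 'k" where
  "mn_mult f g = (\<lambda>\<gamma>. \<Sum>(\<alpha>,\<beta>)\<in>{(\<alpha>,\<beta>). f \<alpha> \<noteq> 0 \<and> g \<beta> \<noteq> 0 \<and> \<alpha> + \<beta> = \<gamma>}. f \<alpha> * g \<beta>)"

definition mn_one :: "'a::zero \<Rightarrow> 'k::{zero,one}" where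
  "mn_one = (\<lambda>\<gamma>. if \<gamma> = 0 then 1 else 0)"

definition mn_inv :: "('a::linordered_ab_group_add \<Rightarrow> 'k::field) \<Rightarrow> 'a \<Rightarrow> 'k" where
  "mn_inv f = (THE h. is_MN h \<and> mn_mult f h = mn_one)"

definition mn_prod :: "('a::ab_group_add \<Rightarrow> 'k::comm_ring_1) list \<Rightarrow> 'a \<Rightarrow> 'k" where
  "mn_prod fs = foldr mn_mult fs mn_one"

(* the monomial x_i = t^{eps i} *)
definition mn_x :: "(nat \<Rightarrow> 'a::zero) \<Rightarrow> nat \<Rightarrow> 'a \<Rightarrow> 'k::{zero,one}" where
  "mn_x eps i = (\<lambda>\<gamma>. if \<gamma> = eps i then 1 else 0)"

(* termwise partial derivative d/dx_j *)
definition mn_deriv :: "'a::ab_group_add set \<Rightarrow> nat \<Rightarrow> (nat \<Rightarrow> 'a) \<Rightarrow> nat \<Rightarrow> ('a \<Rightarrow> 'k::comm_ring_1) \<Rightarrow> 'a \<Rightarrow> 'k" where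
  "mn_deriv G n eps j f = (\<lambda>\<gamma>. of_int (xdeg G n eps (\<gamma> + eps j) j) * f (\<gamma> + eps j))"

definition jac :: "'a::ab_group_add set \<Rightarrow> nat \<Rightarrow> (nat \<Rightarrow> 'a) \<Rightarrow> (nat \<Rightarrow> 'a \<Rightarrow> 'k::comm_ring_1) \<Rightarrow> 'a \<Rightarrow> 'k" where
  "jac G n eps F = (\<lambda>\<gamma>. \<Sum>p\<in>{p. p permutes {..<n}}.
      of_int (sign p) * mn_prod (map (\<lambda>i. mn_deriv G n eps (p i) (F i)) [0..<n]) \<gamma>)"

(* CT_x and Res_x: coefficients b_0 and b_(-1,...,-1), as elements of K_w[G] *)
definition CT :: "'a set \<Rightarrow> ('a \<Rightarrow> 'k::zero) \<Rightarrow> 'a \<Rightarrow> 'k" where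
  "CT G f = (\<lambda>\<gamma>. if \<gamma> \<in> G then f \<gamma> else 0)"

definition Res :: "'a::ab_group_add set \<Rightarrow> nat \<Rightarrow> (nat \<Rightarrow> 'a) \<Rightarrow> ('a \<Rightarrow> 'k::zero) \<Rightarrow> 'a \<Rightarrow> 'k" where
  "Res G n eps f = (\<lambda>\<gamma>. if \<gamma> \<in> G then f (\<gamma> + hvec n eps (\<lambda>i. if i < n then -1 else 0)) else 0)"

definition xcomp :: "'a::ab_group_add set \<Rightarrow> nat \<Rightarrow> (nat \<Rightarrow> 'a) \<Rightarrow> ('a \<Rightarrow> 'k::zero) \<Rightarrow> (nat \<Rightarrow> int) \<Rightarrow> 'a \<Rightarrow> 'k" where
  "xcomp G n eps F k = (\<lambda>\<gamma>. if xdeg G n eps \<gamma> = k then F \<gamma> else 0)"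

definition mn_ord :: "('a::linorder \<Rightarrow> 'k::zero) \<Rightarrow> 'a" where
  "mn_ord f = (LEAST \<gamma>. f \<gamma> \<noteq> 0)"

definition x_init_exp :: "'a::linordered_ab_group_add set \<Rightarrow> nat \<Rightarrow> (nat \<Rightarrow> 'a) \<Rightarrow> ('a \<Rightarrow> 'k::zero) \<Rightarrow> nat \<Rightarrow> int" where
  "x_init_exp G n eps F = (THE k. k \<in> exps n \<and> xcomp G n eps F k \<noteq> (\<lambda>_. 0) \<and>
      (\<forall>k'\<in>exps n. xcomp G n eps F k' \<noteq> (\<lambda>_. 0) \<longrightarrow>
          mn_ord (xcomp G n eps F k) \<le> mn_ord (xcomp G n eps F k')))"

definition jdet :: "'a::linordered_ab_group_add set \<Rightarrow> nat \<Rightarrow> (nat \<Rightarrow> 'a) \<Rightarrow> (nat \<Rightarrow> 'a \<Rightarrow> 'k::zero) \<Rightarrow> int" where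
  "jdet G n eps F = det (mat n n (\<lambda>(i,j). x_init_exp G n eps (F i) j))"

definition LJ :: "'a::linordered_ab_group_add set \<Rightarrow> nat \<Rightarrow> (nat \<Rightarrow> 'a) \<Rightarrow> (nat \<Rightarrow> 'a \<Rightarrow> 'k::field) \<Rightarrow> 'a \<Rightarrow> 'k" where
  "LJ G n eps F = mn_mult (mn_prod (map (mn_x eps) [0..<n]))
      (mn_mult (mn_prod (map (\<lambda>i. mn_inv (F i)) [0..<n])) (jac G n eps F))"

end

theory Submission
  imports Defs "HOL-Combinatorics.Multiset_Permutations" "HOL-Library.Set_Algebras"
begin

text \<open>
  Each nonzero series factors as \<open>F\<^sub>i = c\<^sub>i t\<^bsup>m\<^sub>i\<^esup> (1 + h\<^sub>i)\<close> with \<open>m\<^sub>i\<close> its order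
  and \<open>h\<^sub>i\<close> supported in the positive cone, so the logarithmic derivative
  \<open>x\<^sub>j \<partial>\<^sub>j F\<^sub>i / F\<^sub>i\<close> equals \<open>b\<^sub>i\<^sub>j + x\<^sub>j \<partial>\<^sub>j h\<^sub>i / (1 + h\<^sub>i)\<close>,
  where \<open>b\<^sub>i\<close> is the \<open>x\<close>-exponent of \<open>t\<^bsup>m\<^sub>i\<^esup>\<close>. As \<open>LJ\<close> is the determinant of these
  logarithmic derivatives, \<open>CT\<^sub>x LJ\<close> is the \<open>x\<close>-free part of
  \<open>det (b\<^sub>i\<^sub>j + x\<^sub>j \<partial>\<^sub>j h\<^sub>i / (1 + h\<^sub>i))\<close>. Expanding \<open>(1 + h\<^sub>i)\<^sup>-\<^sup>1\<close> as a geometric series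
  (Neumann's lemma makes all coefficient sums finite), that part becomes a sum over tuples of
  words, word \<open>i\<close> spelled in the support of \<open>h\<^sub>i\<close>, whose letters add up to an \<open>x\<close>-free
  exponent. Each tuple contributes a weight times the integer determinant whose row \<open>i\<close> is
  \<open>b\<^sub>i\<close> if word \<open>i\<close> is empty and the \<open>x\<close>-exponent of its first letter otherwise.
  The weights do not change when the words are rearranged, and summing row \<open>i\<close> over the
  rearrangements of a nonempty word gives, up to a positive integer factor, the total
  \<open>x\<close>-exponent of that word. These totals add up to zero, so only the tuple of empty words
  survives; it contributes \<open>det (b\<^sub>i\<^sub>j)\<close>. No division occurs, so the argument works in every
  characteristic.
\<close>

section \<open>Well-ordered subsets of an ordered group\<close>

definition well_ordered :: "'a::linorder set \<Rightarrow> bool" where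
  "well_ordered S \<longleftrightarrow> (\<forall>T\<subseteq>S. T \<noteq> {} \<longrightarrow> (\<exists>m\<in>T. \<forall>s\<in>T. m \<le> s))"

definition descending_in :: "'a::order set \<Rightarrow> (nat \<Rightarrow> 'a) \<Rightarrow> bool" where
  "descending_in S f \<longleftrightarrow> (\<forall>i. f i \<in> S) \<and> (\<forall>i. f (Suc i) < f i)"

lemma well_ordered_subset: "well_ordered S \<Longrightarrow> T \<subseteq> S \<Longrightarrow> well_ordered T"
  unfolding well_ordered_def by blast

lemma well_ordered_has_least:
  "well_ordered S \<Longrightarrow> S \<noteq> {} \<Longrightarrow> \<exists>m\<in>S. \<forall>s\<in>S. m \<le> s"
  unfolding well_ordered_def by blast

lemma finite_imp_well_ordered: "finite (S::'a::linorder set) \<Longrightarrow> well_ordered S"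
  unfolding well_ordered_def by (metis Min_le Min_in finite_subset)

lemma well_ordered_Un:
  fixes S T :: "'a::linorder set"
  assumes "well_ordered S" "well_ordered T"
  shows "well_ordered (S \<union> T)"
  unfolding well_ordered_def
proof (intro allI impI)
  fix U assume U: "U \<subseteq> S \<union> T" "U \<noteq> {}"
  show "\<exists>m\<in>U. \<forall>s\<in>U. m \<le> s"
  proof (cases "U \<inter> S = {} \<or> U \<inter> T = {}")
    case True
    then have "U \<subseteq> S \<or> U \<subseteq> T" using U(1) by blast
    then show ?thesis using assms U(2) unfolding well_ordered_def by blast
  next
    case False
    then have "U \<inter> S \<noteq> {}" "U \<inter> T \<noteq> {}" by auto
    then obtain m1 m2 where m1: "m1 \<in> U \<inter> S" "\<forall>s\<in>U \<inter> S. m1 \<le> s"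
      and m2: "m2 \<in> U \<inter> T" "\<forall>s\<in>U \<inter> T. m2 \<le> s"
      using well_ordered_has_least[OF well_ordered_subset[OF assms(1)]]
        well_ordered_has_least[OF well_ordered_subset[OF assms(2)]] by (meson inf_le2)
    have "\<forall>s\<in>U. min m1 m2 \<le> s" using m1 m2 U(1) by (auto simp: min_le_iff_disj)
    moreover have "min m1 m2 \<in> U" using m1 m2 by (simp add: min_def)
    ultimately show ?thesis by blast
  qed
qed

lemma well_ordered_image_strict_mono:
  fixes f :: "'a::linorder \<Rightarrow> 'b::linorder"
  assumes "well_ordered S" "strict_mono_on S f"
  shows "well_ordered (f ` S)"
  unfolding well_ordered_def
proof (intro allI impI)
  fix T assume T: "T \<subseteq> f ` S" "T \<noteq> {}"
  then have "S \<inter> f -` T \<noteq> {}" by blast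
  then obtain m where m: "m \<in> S \<inter> f -` T" "\<forall>s\<in>S \<inter> f -` T. m \<le> s"
    using well_ordered_has_least[OF well_ordered_subset[OF assms(1)]] by (metis inf_le1)
  have "f m \<le> t" if "t \<in> T" for t
  proof -
    obtain s where "s \<in> S" "t = f s" using T(1) \<open>t \<in> T\<close> by blast
    then show ?thesis using m that strict_mono_on_leD[OF assms(2)] by auto
  qed
  then show "\<exists>m\<in>T. \<forall>s\<in>T. m \<le> s" using m(1) by blast
qed

lemma well_ordered_translate:
  fixes S :: "'a::linordered_ab_group_add set"
  shows "well_ordered S \<Longrightarrow> well_ordered ((\<lambda>x. x + c) ` S)"
  by (rule well_ordered_image_strict_mono) (auto intro: strict_mono_onI)

lemma descending_seq_less:
  fixes f :: "nat \<Rightarrow> 'a::order"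
  assumes "\<And>i. f (Suc i) < f i" "i < j"
  shows "f j < f i"
  using assms(2)
proof (induction j)
  case (Suc j)
  then show ?case using assms(1) by (metis less_Suc_eq order.strict_trans)
qed simp

lemma well_ordered_iff_no_descending_seq:
  fixes S :: "'a::linorder set"
  shows "well_ordered S \<longleftrightarrow> (\<nexists>f. descending_in S f)"
proof
  assume wo: "well_ordered S"
  show "\<nexists>f. descending_in S f"
  proof
    assume "\<exists>f. descending_in S f"
    then obtain f where f: "\<forall>i. f i \<in> S" "\<forall>i. f (Suc i) < f i"
      unfolding descending_in_def by blast
    have "range f \<subseteq> S" "range f \<noteq> {}" using f(1) by auto
    then obtain m where "m \<in> range f" "\<forall>s\<in>range f. m \<le> s"
      using wo unfolding well_ordered_def by blast
    then obtain k where "\<forall>s\<in>range f. f k \<le> s" by blast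
    then have "f k \<le> f (Suc k)" by blast
    then show False using f(2) by (meson leD)
  qed
next
  assume no_chain: "\<nexists>f. descending_in S f"
  show "well_ordered S" unfolding well_ordered_def
  proof (intro allI impI, rule ccontr)
    fix T assume T: "T \<subseteq> S" "T \<noteq> {}" "\<not> (\<exists>m\<in>T. \<forall>s\<in>T. m \<le> s)"
    then have "\<forall>x\<in>T. \<exists>y\<in>T. y < x" by (meson not_le)
    then obtain g where g: "\<forall>x\<in>T. g x \<in> T \<and> g x < x" by metis
    obtain x0 where x0: "x0 \<in> T" using T by blast
    define f where "f i = (g ^^ i) x0" for i
    have fT: "f i \<in> T" for i by (induction i) (use x0 g in \<open>auto simp: f_def\<close>)
    have "f (Suc i) < f i" for i using g fT[of i] by (simp add: f_def)
    then have "descending_in S f" using fT T(1) unfolding descending_in_def by blast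
    then show False using no_chain by blast
  qed
qed

lemma well_ordered_wf:
  assumes "well_ordered S"
  shows "wf {(x, y). x \<in> S \<and> y \<in> S \<and> x < y}"
  unfolding wf_iff_no_infinite_down_chain
  using assms unfolding well_ordered_iff_no_descending_seq descending_in_def by blast

lemma well_ordered_monotone_subseq:
  fixes f :: "nat \<Rightarrow> 'a::linorder"
  assumes "well_ordered S" "\<And>i. f i \<in> S"
  obtains r where "strict_mono r" "\<And>i. f (r i) \<le> f (r (Suc i))"
proof -
  obtain r where r: "strict_mono r" "monoseq (\<lambda>n. f (r n))" using seq_monosub by blast
  show ?thesis
  proof (cases "\<forall>m n. m \<le> n \<longrightarrow> f (r m) \<le> f (r n)")
    case True
    then show ?thesis using r(1) that by auto
  next
    case False
    then have anti: "\<forall>m n. m \<le> n \<longrightarrow> f (r n) \<le> f (r m)" using r(2) unfolding monoseq_def by blast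
    have "range (\<lambda>n. f (r n)) \<subseteq> S" using assms(2) by auto
    then obtain m where m: "m \<in> range (\<lambda>n. f (r n))" "\<forall>s\<in>range (\<lambda>n. f (r n)). m \<le> s"
      using well_ordered_has_least[OF well_ordered_subset[OF assms(1)]] by blast
    then obtain N where N: "\<forall>i. f (r N) \<le> f (r i)" by auto
    \<comment> \<open>a non-increasing sequence in a well-ordered set is eventually constant\<close>
    have "f (r (N + i)) = f (r N)" for i using anti N by (meson antisym le_add1)
    moreover have "strict_mono (\<lambda>i. r (N + i))" using r(1) unfolding strict_mono_def by simp
    ultimately show ?thesis using that[of "\<lambda>i. r (N + i)"] by (metis add_Suc_right order_refl)
  qed
qed

lemma well_ordered_set_plus:
  fixes A B :: "'a::linordered_ab_group_add set"
  assumes "well_ordered A" "well_ordered B"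
  shows "well_ordered (A + B)"
  unfolding well_ordered_iff_no_descending_seq
proof
  assume "\<exists>f. descending_in (A + B) f"
  then obtain f where f: "\<forall>i. f i \<in> A + B" "\<And>i. f (Suc i) < f i"
    unfolding descending_in_def by blast
  have "\<exists>p. fst p \<in> A \<and> snd p \<in> B \<and> f i = fst p + snd p" for i
  proof -
    obtain a b where "a \<in> A" "b \<in> B" "f i = a + b" using f(1) unfolding set_plus_def by blast
    then show ?thesis by (intro exI[of _ "(a, b)"]) simp
  qed
  then have "\<forall>i. \<exists>p. fst p \<in> A \<and> snd p \<in> B \<and> f i = fst p + snd p" by blast
  from choice[OF this] obtain P
    where P: "\<forall>i. fst (P i) \<in> A \<and> snd (P i) \<in> B \<and> f i = fst (P i) + snd (P i)" by blast
  define a where "a i = fst (P i)" for i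
  define b where "b i = snd (P i)" for i
  have ab: "\<forall>i. a i \<in> A \<and> b i \<in> B \<and> f i = a i + b i" using P by (simp add: a_def b_def)
  obtain r1 where r1: "strict_mono r1" "\<And>i. a (r1 i) \<le> a (r1 (Suc i))"
    using well_ordered_monotone_subseq[OF assms(1), of a] ab by blast
  obtain r2 where r2: "strict_mono r2" "\<And>i. b (r1 (r2 i)) \<le> b (r1 (r2 (Suc i)))"
    using well_ordered_monotone_subseq[OF assms(2), of "\<lambda>i. b (r1 i)"] ab by blast
  have mono1: "a (r1 i) \<le> a (r1 j)" if "i \<le> j" for i j
    using that
  proof (induction j)
    case (Suc j)
    show ?case
    proof (cases "i = Suc j")
      case False
      then have "a (r1 i) \<le> a (r1 j)" using Suc by simp
      also have "\<dots> \<le> a (r1 (Suc j))" using r1(2) by blast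
      finally show ?thesis .
    qed simp
  qed simp
  define R where "R i = r1 (r2 i)" for i
  have "R 0 < R 1" using r1(1) r2(1) by (simp add: R_def strict_mono_def)
  then have lt: "f (R 1) < f (R 0)" using descending_seq_less[of f, OF f(2)] by blast
  have "a (R 0) \<le> a (R 1)" using mono1 r2(1) by (simp add: R_def strict_mono_less_eq)
  moreover have "b (R 0) \<le> b (R 1)" using r2(2)[of 0] by (simp add: R_def)
  ultimately have "f (R 0) \<le> f (R 1)" using ab by (simp add: add_mono)
  then show False using lt by simp
qed

lemma well_ordered_finite_splittings:
  fixes A B :: "'a::linordered_ab_group_add set"
  assumes "well_ordered A" "well_ordered B"
  shows "finite {a\<in>A. g - a \<in> B}"
proof (rule ccontr)
  assume "infinite {a\<in>A. g - a \<in> B}"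
  then obtain f :: "nat \<Rightarrow> 'a" where f: "inj f" "range f \<subseteq> {a\<in>A. g - a \<in> B}"
    using infinite_countable_subset by blast
  obtain r where r: "strict_mono r" "\<And>i. f (r i) \<le> f (r (Suc i))"
    using well_ordered_monotone_subseq[OF assms(1), of f] f(2) by blast
  have "f (r i) < f (r (Suc i))" for i
  proof -
    have "r i \<noteq> r (Suc i)" using r(1) by (simp add: strict_mono_eq)
    then have "f (r i) \<noteq> f (r (Suc i))" using f(1) by (simp add: inj_eq)
    then show ?thesis using r(2)[of i] by (simp add: less_le)
  qed
  then have "descending_in B (\<lambda>i. g - f (r i))"
    using f(2) unfolding descending_in_def by auto
  then show False using assms(2) unfolding well_ordered_iff_no_descending_seq by blast
qed

section \<open>Neumann's lemma\<close>

text \<open>Nash-Williams' minimal bad sequence construction: among all descending sequences in \<open>S\<close>,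
  choose each term in turn so as to minimise a measure \<open>\<mu>\<close>, subject to the prefix chosen so far
  still extending to a descending sequence.\<close>

definition descending_prefix :: "'a::order set \<Rightarrow> 'a list \<Rightarrow> bool" where
  "descending_prefix S xs \<longleftrightarrow> (\<exists>f. descending_in S f \<and> (\<forall>i<length xs. f i = xs ! i))"

definition minimal_extension :: "'a::order set \<Rightarrow> ('a \<Rightarrow> nat) \<Rightarrow> 'a list \<Rightarrow> 'a" where
  "minimal_extension S \<mu> xs = (SOME x. descending_prefix S (xs @ [x]) \<and>
     (\<forall>y. descending_prefix S (xs @ [y]) \<longrightarrow> \<mu> x \<le> \<mu> y))"

primrec minimal_prefix :: "'a::order set \<Rightarrow> ('a \<Rightarrow> nat) \<Rightarrow> nat \<Rightarrow> 'a list" where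
  "minimal_prefix S \<mu> 0 = []"
| "minimal_prefix S \<mu> (Suc k) = minimal_prefix S \<mu> k @ [minimal_extension S \<mu> (minimal_prefix S \<mu> k)]"

declare minimal_prefix.simps(2)[simp del]

lemma length_minimal_prefix [simp]: "length (minimal_prefix S \<mu> k) = k"
  by (induction k) (simp_all add: minimal_prefix.simps)

lemma descending_prefix_snoc:
  assumes "descending_in S f" "\<forall>i<length xs. f i = xs ! i"
  shows "descending_prefix S (xs @ [f (length xs)])"
  unfolding descending_prefix_def
proof (intro exI[of _ f] conjI allI impI)
  fix i assume "i < length (xs @ [f (length xs)])"
  then have "i < length xs \<or> i = length xs" by auto
  then show "f i = (xs @ [f (length xs)]) ! i" using assms(2) by (auto simp: nth_append)
qed (rule assms(1))

lemma minimal_extension_spec: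
  assumes "descending_prefix S xs"
  shows "descending_prefix S (xs @ [minimal_extension S \<mu> xs])"
    "descending_prefix S (xs @ [y]) \<Longrightarrow> \<mu> (minimal_extension S \<mu> xs) \<le> \<mu> y"
proof -
  obtain f where "descending_in S f" "\<forall>i<length xs. f i = xs ! i"
    using assms unfolding descending_prefix_def by blast
  then have "descending_prefix S (xs @ [f (length xs)])" by (rule descending_prefix_snoc)
  then obtain x where
    "descending_prefix S (xs @ [x]) \<and> (\<forall>y. descending_prefix S (xs @ [y]) \<longrightarrow> \<mu> x \<le> \<mu> y)"
    using ex_has_least_nat[of "\<lambda>x. descending_prefix S (xs @ [x])" _ \<mu>] by blast
  then have "descending_prefix S (xs @ [minimal_extension S \<mu> xs]) \<and>
      (\<forall>y. descending_prefix S (xs @ [y]) \<longrightarrow> \<mu> (minimal_extension S \<mu> xs) \<le> \<mu> y)"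
    unfolding minimal_extension_def by (rule someI)
  then show "descending_prefix S (xs @ [minimal_extension S \<mu> xs])"
    "descending_prefix S (xs @ [y]) \<Longrightarrow> \<mu> (minimal_extension S \<mu> xs) \<le> \<mu> y" by blast+
qed

lemma minimal_prefix_descending:
  assumes "\<exists>f. descending_in S f"
  shows "descending_prefix S (minimal_prefix S \<mu> k)"
proof (induction k)
  case 0
  then show ?case using assms by (simp add: descending_prefix_def)
next
  case (Suc k)
  then show ?case using minimal_extension_spec(1)[OF Suc.IH, of \<mu>] by (simp add: minimal_prefix.simps)
qed

lemma minimal_prefix_nth:
  "i < k \<Longrightarrow> minimal_prefix S \<mu> k ! i = minimal_extension S \<mu> (minimal_prefix S \<mu> i)"
proof (induction k)
  case (Suc k)
  then show ?case by (cases "i = k") (auto simp: nth_append minimal_prefix.simps)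
qed simp

lemma minimal_descending_seq:
  fixes \<mu> :: "'a::order \<Rightarrow> nat"
  assumes "\<exists>f. descending_in S f"
  obtains m where "descending_in S m"
    "\<And>k f. descending_in S f \<Longrightarrow> (\<forall>i<k. f i = m i) \<Longrightarrow> \<mu> (m k) \<le> \<mu> (f k)"
proof
  define m where "m i = minimal_extension S \<mu> (minimal_prefix S \<mu> i)" for i
  show "descending_in S m" unfolding descending_in_def
  proof (intro conjI allI)
    fix i
    obtain f where f: "descending_in S f"
        "\<forall>j<Suc (Suc i). f j = minimal_prefix S \<mu> (Suc (Suc i)) ! j"
      using minimal_prefix_descending[OF assms, of \<mu> "Suc (Suc i)"]
      unfolding descending_prefix_def by auto
    have "f i = m i" "f (Suc i) = m (Suc i)" using f(2) by (auto simp: minimal_prefix_nth m_def)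
    then show "m i \<in> S" "m (Suc i) < m i" using f(1) unfolding descending_in_def by metis+
  qed
  fix k f assume f: "descending_in S f" "\<forall>i<k. f i = m i"
  then have "descending_prefix S (minimal_prefix S \<mu> k @ [f k])"
    using descending_prefix_snoc[of S f "minimal_prefix S \<mu> k"] by (simp add: minimal_prefix_nth m_def)
  then show "\<mu> (m k) \<le> \<mu> (f k)"
    unfolding m_def by (rule minimal_extension_spec(2)[OF minimal_prefix_descending[OF assms]])
qed

definition sums_of :: "'a::monoid_add set \<Rightarrow> 'a set" where
  "sums_of A = sum_list ` lists A"

definition sum_length :: "'a::monoid_add set \<Rightarrow> 'a \<Rightarrow> nat" where
  "sum_length A x = (LEAST n. \<exists>t\<in>lists A. length t = n \<and> sum_list t = x)"

definition lists_with_sum :: "'a::monoid_add set \<Rightarrow> 'a \<Rightarrow> 'a list set" where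
  "lists_with_sum A b = {t \<in> lists A. sum_list t = b}"

lemma sums_of_nonneg:
  fixes A :: "'a::ordered_comm_monoid_add set"
  assumes "A \<subseteq> {a. 0 < a}" "x \<in> sums_of A"
  shows "0 \<le> x"
  using assms by (auto simp: sums_of_def intro!: sum_list_nonneg)

lemma sums_of_split_first:
  assumes "x \<in> sums_of A" "x \<noteq> 0"
  obtains a y where "a \<in> A" "y \<in> sums_of A" "x = a + y" "sum_length A y < sum_length A x"
proof -
  have "\<exists>t\<in>lists A. length t = sum_length A x \<and> sum_list t = x"
    unfolding sum_length_def by (rule LeastI_ex) (use assms(1) in \<open>auto simp: sums_of_def\<close>)
  then obtain t where t: "t \<in> lists A" "length t = sum_length A x" "sum_list t = x" by blast
  then obtain a t' where at: "t = a # t'" using assms(2) by (cases t) auto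
  have "sum_length A (sum_list t') \<le> length t'"
    unfolding sum_length_def by (rule Least_le) (use t(1) at in auto)
  also have "\<dots> < sum_length A x" using t(2) at by simp
  finally show ?thesis using that t at by (auto simp: sums_of_def)
qed

lemma descending_in_replace_tail:
  fixes m y a :: "nat \<Rightarrow> 'a::linordered_ab_group_add"
  assumes m: "descending_in S m" and y: "\<And>i. y i \<in> S" "\<And>i. m i = a i + y i"
    and a: "\<And>i. 0 < a i" and r: "strict_mono r" "\<And>j. a (r j) \<le> a (r (Suc j))"
  shows "descending_in S (\<lambda>j. if j < r 0 then m j else y (r (j - r 0)))" (is "descending_in S ?f")
  unfolding descending_in_def
proof (intro conjI allI)
  have mS: "m i \<in> S" and mdec: "m (Suc i) < m i" for i using m unfolding descending_in_def by auto
  fix j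
  show "?f j \<in> S" using mS y by simp
  consider "Suc j < r 0" | "Suc j = r 0" | "r 0 \<le> j" by linarith
  then show "?f (Suc j) < ?f j"
  proof cases
    case 1
    then show ?thesis using mdec by simp
  next
    case 2
    have "y (r 0) < m (r 0)" using y(2)[of "r 0"] a[of "r 0"] by simp
    also have "m (r 0) < m j" using mdec[of j] 2 by simp
    finally show ?thesis using 2 by simp
  next
    case 3
    define t where "t = j - r 0"
    have fj: "?f j = y (r t)" "?f (Suc j) = y (r (Suc t))" using 3 by (auto simp: t_def Suc_diff_le)
    have "m (r (Suc t)) < m (r t)"
      using descending_seq_less[of m, OF mdec] r(1) by (simp add: strict_mono_def)
    then have "m (r (Suc t)) + a (r t) < m (r t) + a (r (Suc t))"
      using r(2)[of t] by (rule add_less_le_mono)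
    then show ?thesis using fj y(2) by (simp add: algebra_simps)
  qed
qed

theorem neumann_well_ordered:
  fixes A :: "'a::linordered_ab_group_add set"
  assumes pos: "A \<subseteq> {a. 0 < a}" and woA: "well_ordered A"
  shows "well_ordered (sums_of A)"
proof (rule ccontr)
  assume "\<not> well_ordered (sums_of A)"
  then have "\<exists>f. descending_in (sums_of A) f" unfolding well_ordered_iff_no_descending_seq by blast
  then obtain m where bad: "descending_in (sums_of A) m" and
    minm: "\<And>k f. descending_in (sums_of A) f \<Longrightarrow> (\<forall>i<k. f i = m i) \<Longrightarrow>
      sum_length A (m k) \<le> sum_length A (f k)"
    using minimal_descending_seq[where \<mu> = "sum_length A"] by blast
  have mS: "m i \<in> sums_of A" and mdec: "m (Suc i) < m i" for i using bad unfolding descending_in_def by auto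
  have "m i \<noteq> 0" for i using sums_of_nonneg[OF pos mS[of "Suc i"]] mdec[of i] by auto
  then have "\<exists>p. fst p \<in> A \<and> snd p \<in> sums_of A \<and> m i = fst p + snd p \<and>
      sum_length A (snd p) < sum_length A (m i)" for i
    by (metis sums_of_split_first[OF mS] fst_conv snd_conv)
  then obtain P where P: "\<forall>i. fst (P i) \<in> A \<and> snd (P i) \<in> sums_of A \<and> m i = fst (P i) + snd (P i) \<and>
      sum_length A (snd (P i)) < sum_length A (m i)"
    by metis
  define a where "a i = fst (P i)" for i
  define y where "y i = snd (P i)" for i
  have aA: "a i \<in> A" and yS: "y i \<in> sums_of A" and may: "m i = a i + y i"
    and ylen: "sum_length A (y i) < sum_length A (m i)" for i
    using P unfolding a_def y_def by blast+
  obtain r where r: "strict_mono r" "\<And>j. a (r j) \<le> a (r (Suc j))"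
    using well_ordered_monotone_subseq[OF woA, of a] aA by blast
  \<comment> \<open>replacing the tail \<open>m (r 0), m (r 1), \<dots>\<close> by the shorter sums \<open>y (r 0), y (r 1), \<dots>\<close>
    contradicts the minimality of \<open>m\<close> at position \<open>r 0\<close>\<close>
  have "descending_in (sums_of A) (\<lambda>j. if j < r 0 then m j else y (r (j - r 0)))"
    by (rule descending_in_replace_tail[OF bad yS may _ r]) (use aA pos in auto)
  then have "sum_length A (m (r 0)) \<le> sum_length A (y (r 0))" using minm[of _ "r 0"] by fastforce
  then show False using ylen[of "r 0"] by simp
qed

lemma lists_with_sum_unfold:
  fixes A :: "'a::ab_group_add set"
  shows "lists_with_sum A b = (if b = 0 then {[]} else {}) \<union>
           (\<Union>a\<in>{a\<in>A. b - a \<in> sums_of A}. (Cons a) ` lists_with_sum A (b - a))"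
proof (intro equalityI subsetI)
  fix t assume t: "t \<in> lists_with_sum A b"
  show "t \<in> (if b = 0 then {[]} else {}) \<union> (\<Union>a\<in>{a\<in>A. b - a \<in> sums_of A}. (Cons a) ` lists_with_sum A (b - a))"
  proof (cases t)
    case Nil
    then show ?thesis using t by (simp add: lists_with_sum_def)
  next
    case (Cons a t')
    then have "a \<in> A" "t' \<in> lists A" "sum_list t' = b - a"
      using t by (auto simp: lists_with_sum_def algebra_simps)
    then have "b - a \<in> sums_of A" "t' \<in> lists_with_sum A (b - a)"
      unfolding sums_of_def lists_with_sum_def by (auto intro!: image_eqI[of _ _ t'])
    then show ?thesis using Cons \<open>a \<in> A\<close> by blast
  qed
qed (auto simp: lists_with_sum_def split: if_splits)

lemma finite_lists_with_sum:
  fixes A :: "'a::linordered_ab_group_add set"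
  assumes pos: "A \<subseteq> {a. 0 < a}" and woA: "well_ordered A"
  shows "finite (lists_with_sum A b)"
proof -
  have woS: "well_ordered (sums_of A)" using neumann_well_ordered[OF pos woA] .
  show ?thesis
  proof (induction b rule: wf_induct_rule[OF well_ordered_wf[OF woS]])
    case (1 b)
    show ?case
    proof (cases "b \<in> sums_of A")
      case False
      then have "lists_with_sum A b = {}" unfolding lists_with_sum_def sums_of_def by auto
      then show ?thesis by simp
    next
      case True
      have "finite {a\<in>A. b - a \<in> sums_of A}" using well_ordered_finite_splittings[OF woA woS] .
      moreover have "finite (lists_with_sum A (b - a))" if "a \<in> A" "b - a \<in> sums_of A" for a
        by (rule 1) (use that True pos in auto)
      ultimately show ?thesis by (subst lists_with_sum_unfold) auto
    qed
  qed
qed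

lemma sum_lists_with_sum_unfold:
  fixes A :: "'a::linordered_ab_group_add set"
  assumes pos: "A \<subseteq> {a. 0 < a}" and woA: "well_ordered A"
  shows "(\<Sum>t\<in>lists_with_sum A b. \<Phi> t) = (if b = 0 then \<Phi> [] else 0) +
           (\<Sum>a\<in>{a\<in>A. b - a \<in> sums_of A}. \<Sum>t\<in>lists_with_sum A (b - a). \<Phi> (a # t))"
proof -
  let ?I = "{a\<in>A. b - a \<in> sums_of A}"
  let ?E = "(if b = 0 then {[]} else {}) :: 'a list set"
  have finI: "finite ?I" using well_ordered_finite_splittings[OF woA neumann_well_ordered[OF pos woA]] .
  have fin: "finite (lists_with_sum A c)" for c using finite_lists_with_sum[OF pos woA] .
  have "(\<Sum>t\<in>lists_with_sum A b. \<Phi> t) = (\<Sum>t\<in>?E \<union> (\<Union>a\<in>?I. (Cons a) ` lists_with_sum A (b - a)). \<Phi> t)"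
    by (subst lists_with_sum_unfold) simp
  also have "\<dots> = (\<Sum>t\<in>?E. \<Phi> t) + (\<Sum>t\<in>(\<Union>a\<in>?I. (Cons a) ` lists_with_sum A (b - a)). \<Phi> t)"
    by (rule sum.union_disjoint) (use finI fin in auto)
  also have "(\<Sum>t\<in>(\<Union>a\<in>?I. (Cons a) ` lists_with_sum A (b - a)). \<Phi> t) =
      (\<Sum>a\<in>?I. \<Sum>t\<in>(Cons a) ` lists_with_sum A (b - a). \<Phi> t)"
    by (rule sum.UNION_disjoint) (use finI fin in auto)
  also have "\<dots> = (\<Sum>a\<in>?I. \<Sum>t\<in>lists_with_sum A (b - a). \<Phi> (a # t))"
    by (rule sum.cong[OF refl]) (simp add: sum.reindex)
  finally show ?thesis by simp
qed

section \<open>The ring of Malcev-Neumann series\<close>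

definition supp :: "('a \<Rightarrow> 'k::zero) \<Rightarrow> 'a set" where
  "supp f = {x. f x \<noteq> 0}"

lemma is_MN_iff_well_ordered: "is_MN f \<longleftrightarrow> well_ordered (supp f)"
  by (simp add: is_MN_def well_ordered_def supp_def)

lemma supp_mn_mult: "supp (mn_mult f g) \<subseteq> supp f + supp g"
proof
  fix x assume x: "x \<in> supp (mn_mult f g)"
  show "x \<in> supp f + supp g"
  proof (rule ccontr)
    assume "x \<notin> supp f + supp g"
    then have "{(\<alpha>, \<beta>). f \<alpha> \<noteq> 0 \<and> g \<beta> \<noteq> 0 \<and> \<alpha> + \<beta> = x} = {}"
      unfolding set_plus_def supp_def by blast
    then have "mn_mult f g x = 0" unfolding mn_mult_def by (simp only: sum.empty)
    then show False using x unfolding supp_def by simp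
  qed
qed

lemma is_MN_mult:
  fixes f g :: "'a::linordered_ab_group_add \<Rightarrow> 'k::comm_ring_1"
  assumes "is_MN f" "is_MN g"
  shows "is_MN (mn_mult f g)"
proof -
  have "well_ordered (supp f + supp g)"
    using well_ordered_set_plus assms unfolding is_MN_iff_well_ordered by blast
  then show ?thesis using well_ordered_subset[OF _ supp_mn_mult] unfolding is_MN_iff_well_ordered by blast
qed

lemma mn_mult_eq_sum:
  fixes f g :: "'a::linordered_ab_group_add \<Rightarrow> 'k::comm_ring_1"
  assumes "finite X" "\<And>a. f a \<noteq> 0 \<Longrightarrow> g (x - a) \<noteq> 0 \<Longrightarrow> a \<in> X"
  shows "mn_mult f g x = (\<Sum>a\<in>X. f a * g (x - a))"
proof -
  let ?P = "{(\<alpha>, \<beta>). f \<alpha> \<noteq> 0 \<and> g \<beta> \<noteq> 0 \<and> \<alpha> + \<beta> = x}"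
  let ?Y = "{a. f a \<noteq> 0 \<and> g (x - a) \<noteq> 0}"
  have "?P = (\<lambda>a. (a, x - a)) ` ?Y" by (auto simp: algebra_simps image_iff)
  moreover have "inj_on (\<lambda>a. (a, x - a)) ?Y" by (auto simp: inj_on_def)
  ultimately have "mn_mult f g x = (\<Sum>a\<in>?Y. f a * g (x - a))"
    unfolding mn_mult_def by (simp add: sum.reindex)
  also have "\<dots> = (\<Sum>a\<in>X. f a * g (x - a))"
    by (rule sum.mono_neutral_left) (use assms in auto)
  finally show ?thesis .
qed

lemma finite_convolution_support:
  fixes f g :: "'a::linordered_ab_group_add \<Rightarrow> 'k::zero"
  assumes "is_MN f" "is_MN g"
  shows "finite {a. f a \<noteq> 0 \<and> g (x - a) \<noteq> 0}"
  using well_ordered_finite_splittings[of "supp f" "supp g" x] assms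
  by (simp add: is_MN_iff_well_ordered supp_def)

lemma mn_mult_comm: "mn_mult f g = mn_mult g (f :: 'a::ab_group_add \<Rightarrow> 'k::comm_ring_1)"
proof
  fix x
  show "mn_mult f g x = mn_mult g f x"
    unfolding mn_mult_def
    by (rule sum.reindex_bij_witness[of _ "\<lambda>(a, b). (b, a)" "\<lambda>(a, b). (b, a)"])
       (auto simp: algebra_simps)
qed

lemma is_MN_one: "is_MN (mn_one :: 'a::linordered_ab_group_add \<Rightarrow> 'k::{zero,one})"
  unfolding is_MN_iff_well_ordered
  by (rule finite_imp_well_ordered, rule finite_subset[of _ "{0}"]) (auto simp: supp_def mn_one_def)

lemma mn_one_mult:
  fixes g :: "'a::linordered_ab_group_add \<Rightarrow> 'k::comm_ring_1"
  shows "mn_mult mn_one g = g"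
proof
  fix x
  have "mn_mult mn_one g x = (\<Sum>a\<in>{0}. mn_one a * g (x - a))"
    by (rule mn_mult_eq_sum) (auto simp: mn_one_def split: if_splits)
  then show "mn_mult mn_one g x = g x" by (simp add: mn_one_def)
qed

lemma is_MN_add:
  fixes f g :: "'a::linordered_ab_group_add \<Rightarrow> 'k::comm_ring_1"
  assumes "is_MN f" "is_MN g"
  shows "is_MN (\<lambda>x. f x + g x)"
proof -
  have "supp (\<lambda>x. f x + g x) \<subseteq> supp f \<union> supp g" by (auto simp: supp_def)
  then show ?thesis using assms well_ordered_Un well_ordered_subset unfolding is_MN_iff_well_ordered by blast
qed

lemma is_MN_uminus: "is_MN f \<Longrightarrow> is_MN (\<lambda>x. - f x :: 'k::ab_group_add)"
  unfolding is_MN_iff_well_ordered supp_def by simp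

lemma is_MN_zero: "is_MN (\<lambda>x. 0 :: 'k::zero)"
  by (simp add: is_MN_def)

lemma mn_mult_distrib:
  fixes f g h :: "'a::linordered_ab_group_add \<Rightarrow> 'k::comm_ring_1"
  assumes "is_MN f" "is_MN g" "is_MN h"
  shows "mn_mult f (\<lambda>x. g x + h x) x = mn_mult f g x + mn_mult f h x"
proof -
  let ?X = "{a. f a \<noteq> 0 \<and> g (x - a) \<noteq> 0} \<union> {a. f a \<noteq> 0 \<and> h (x - a) \<noteq> 0}"
  have fin: "finite ?X" using finite_convolution_support assms by blast
  have "mn_mult f (\<lambda>x. g x + h x) x = (\<Sum>a\<in>?X. f a * (g (x - a) + h (x - a)))"
    by (rule mn_mult_eq_sum[OF fin]) auto
  moreover have "mn_mult f g x = (\<Sum>a\<in>?X. f a * g (x - a))"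
    by (rule mn_mult_eq_sum[OF fin]) auto
  moreover have "mn_mult f h x = (\<Sum>a\<in>?X. f a * h (x - a))"
    by (rule mn_mult_eq_sum[OF fin]) auto
  ultimately show ?thesis by (simp add: sum.distrib algebra_simps)
qed

lemma mn_mult_assoc:
  fixes f g h :: "'a::linordered_ab_group_add \<Rightarrow> 'k::comm_ring_1"
  assumes f: "is_MN f" and g: "is_MN g" and h: "is_MN h"
  shows "mn_mult (mn_mult f g) h x = mn_mult f (mn_mult g h) x"
proof -
  have wf: "well_ordered (supp f)" and wg: "well_ordered (supp g)" and wh: "well_ordered (supp h)"
    using assms by (simp_all add: is_MN_iff_well_ordered)
  define X where "X = {b\<in>(supp f + supp g). x - b \<in> supp h}"
  define Y where "Y = {a\<in>supp f. x - a \<in> (supp g + supp h)}"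
  have finX: "finite X"
    unfolding X_def by (rule well_ordered_finite_splittings[OF well_ordered_set_plus[OF wf wg] wh])
  have finY: "finite Y"
    unfolding Y_def by (rule well_ordered_finite_splittings[OF wf well_ordered_set_plus[OF wg wh]])
  have "mn_mult (mn_mult f g) h x = (\<Sum>b\<in>X. mn_mult f g b * h (x - b))"
    by (rule mn_mult_eq_sum[OF finX]) (use supp_mn_mult[of f g] in \<open>auto simp: X_def supp_def\<close>)
  also have "\<dots> = (\<Sum>b\<in>X. (\<Sum>a\<in>Y. f a * g (b - a)) * h (x - b))"
  proof (rule sum.cong[OF refl])
    fix b assume b: "b \<in> X"
    have "mn_mult f g b = (\<Sum>a\<in>Y. f a * g (b - a))"
    proof (rule mn_mult_eq_sum[OF finY])
      fix a assume "f a \<noteq> 0" "g (b - a) \<noteq> 0"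
      moreover have "h (x - b) \<noteq> 0" using b by (simp add: X_def supp_def)
      moreover have "x - a = (b - a) + (x - b)" by (simp add: algebra_simps)
      ultimately show "a \<in> Y" unfolding Y_def set_plus_def supp_def by blast
    qed
    then show "mn_mult f g b * h (x - b) = (\<Sum>a\<in>Y. f a * g (b - a)) * h (x - b)" by simp
  qed
  also have "\<dots> = (\<Sum>a\<in>Y. \<Sum>b\<in>X. f a * g (b - a) * h (x - b))"
    by (simp add: sum_distrib_right sum.swap[of _ X Y])
  also have "\<dots> = (\<Sum>a\<in>Y. f a * mn_mult g h (x - a))"
  proof (rule sum.cong[OF refl])
    fix a assume a: "a \<in> Y"
    have "mn_mult g h (x - a) = (\<Sum>d\<in>(\<lambda>b. b - a) ` X. g d * h (x - a - d))"
    proof (rule mn_mult_eq_sum[OF finite_imageI[OF finX]])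
      fix d assume d: "g d \<noteq> 0" "h (x - a - d) \<noteq> 0"
      have "f a \<noteq> 0" using a by (simp add: Y_def supp_def)
      then have "a + d \<in> (supp f + supp g)" unfolding set_plus_def supp_def using d(1) by blast
      moreover have "x - (a + d) \<in> supp h" using d(2) by (simp add: supp_def diff_diff_eq)
      ultimately have "a + d \<in> X" unfolding X_def by blast
      then show "d \<in> (\<lambda>b. b - a) ` X" by (auto simp: image_iff intro!: bexI[of _ "a + d"])
    qed
    also have "\<dots> = (\<Sum>b\<in>X. g (b - a) * h (x - b))"
      by (subst sum.reindex) (auto simp: inj_on_def algebra_simps)
    finally show "(\<Sum>b\<in>X. f a * g (b - a) * h (x - b)) = f a * mn_mult g h (x - a)"
      by (simp add: sum_distrib_left mult.assoc)
  qed
  also have "\<dots> = mn_mult f (mn_mult g h) x"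
    by (rule mn_mult_eq_sum[OF finY, symmetric]) (use supp_mn_mult[of g h] in \<open>auto simp: Y_def supp_def\<close>)
  finally show ?thesis .
qed

lemma mn_mult_distrib_right:
  fixes f g h :: "'a::linordered_ab_group_add \<Rightarrow> 'k::comm_ring_1"
  assumes "is_MN f" "is_MN g" "is_MN h"
  shows "mn_mult (\<lambda>x. f x + g x) h = (\<lambda>x. mn_mult f h x + mn_mult g h x)"
  using assms by (simp add: mn_mult_comm[of _ h] mn_mult_distrib[OF assms(3,1,2)] fun_eq_iff)

typedef (overloaded) ('a::linordered_ab_group_add, 'k::field) mns = "{f :: 'a \<Rightarrow> 'k. is_MN f}"
  morphisms coef Abs_mns
  by (intro exI[of _ "\<lambda>_. 0"]) (simp add: is_MN_def)

setup_lifting type_definition_mns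

lemma is_MN_coef: "is_MN (coef f)"
  using coef by blast

lemma mns_eq_iff: "f = g \<longleftrightarrow> (\<forall>x. coef f x = coef g x)"
  by (metis coef_inject ext)

instantiation mns :: (linordered_ab_group_add, field) comm_ring_1
begin

lift_definition zero_mns :: "('a, 'b) mns" is "\<lambda>_. 0"
  by (rule is_MN_zero)

lift_definition one_mns :: "('a, 'b) mns" is "mn_one"
  by (rule is_MN_one)

lift_definition plus_mns :: "('a, 'b) mns \<Rightarrow> ('a, 'b) mns \<Rightarrow> ('a, 'b) mns" is "\<lambda>f g x. f x + g x"
  by (rule is_MN_add)

lift_definition uminus_mns :: "('a, 'b) mns \<Rightarrow> ('a, 'b) mns" is "\<lambda>f x. - f x"
  by (rule is_MN_uminus)

lift_definition minus_mns :: "('a, 'b) mns \<Rightarrow> ('a, 'b) mns \<Rightarrow> ('a, 'b) mns" is "\<lambda>f g x. f x - g x"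
  by (simp only: diff_conv_add_uminus, rule is_MN_add, assumption, rule is_MN_uminus)

lift_definition times_mns :: "('a, 'b) mns \<Rightarrow> ('a, 'b) mns \<Rightarrow> ('a, 'b) mns" is "mn_mult"
  by (rule is_MN_mult)

instance
proof
  fix a b c :: "('a, 'b) mns"
  show "a * b * c = a * (b * c)" by transfer (rule ext, rule mn_mult_assoc)
  show "a * b = b * a" by transfer (rule mn_mult_comm)
  show "1 * a = a" by transfer (rule mn_one_mult)
  show "a + b + c = a + (b + c)" by transfer (simp add: algebra_simps)
  show "a + b = b + a" by transfer (simp add: algebra_simps)
  show "0 + a = a" by transfer simp
  show "- a + a = 0" by transfer simp
  show "a - b = a + - b" by transfer simp
  show "(a + b) * c = a * c + b * c" by transfer (rule mn_mult_distrib_right)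
  show "(0::('a, 'b) mns) \<noteq> 1" by transfer (auto simp: mn_one_def fun_eq_iff)
qed

end

lemma coef_zero [simp]: "coef 0 = (\<lambda>_. 0)"
  by transfer simp

lemma coef_one: "coef 1 = mn_one"
  by transfer simp

lemma coef_add [simp]: "coef (f + g) x = coef f x + coef g x"
  by transfer simp

lemma coef_uminus [simp]: "coef (- f) x = - coef f x"
  by transfer simp

lemma coef_mult: "coef (f * g) = mn_mult (coef f) (coef g)"
  by transfer simp

lemma coef_sum: "coef (sum F A) x = (\<Sum>a\<in>A. coef (F a) x)"
  by (induction A rule: infinite_finite_induct) auto

section \<open>Inverses of Malcev-Neumann series\<close>

lift_definition monomial :: "'k::field \<Rightarrow> 'a::linordered_ab_group_add \<Rightarrow> ('a, 'k) mns" is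
  "\<lambda>c a x. if x = a then c else 0"
proof -
  fix c :: 'k and a :: 'a
  have "supp (\<lambda>x. if x = a then c else 0) \<subseteq> {a}" by (auto simp: supp_def)
  then show "is_MN (\<lambda>x. if x = a then c else 0)" unfolding is_MN_iff_well_ordered
    by (meson finite.emptyI finite.insertI finite_imp_well_ordered well_ordered_subset)
qed

lemma coef_monomial_mult: "coef (monomial c a * f) x = c * coef f (x - a)"
proof -
  have "coef (monomial c a * f) x = (\<Sum>b\<in>{a}. coef (monomial c a) b * coef f (x - b))"
    unfolding coef_mult by (rule mn_mult_eq_sum) (auto simp: monomial.rep_eq split: if_splits)
  then show ?thesis by (simp add: monomial.rep_eq)
qed

lemma monomial_mult: "monomial c a * monomial d b = monomial (c * d) (a + b)"
  by (simp add: mns_eq_iff coef_monomial_mult monomial.rep_eq algebra_simps)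

lemma monomial_one: "monomial 1 0 = 1"
  by (simp add: mns_eq_iff monomial.rep_eq coef_one mn_one_def)

lemma monomial_add: "monomial (c + d) a = monomial c a + monomial d a"
  by (simp add: mns_eq_iff monomial.rep_eq)

lemma monomial_uminus: "monomial (- c) a = - monomial c a"
  by (simp add: mns_eq_iff monomial.rep_eq)

lemma monomial_zero: "monomial 0 a = 0"
  by (simp add: mns_eq_iff monomial.rep_eq)

lemma monomial_of_nat: "monomial (of_nat k) 0 = of_nat k"
  by (induction k) (simp_all add: monomial_zero monomial_add monomial_one)

lemma monomial_of_int: "monomial (of_int k) 0 = of_int k"
proof (cases k rule: int_cases)
  case (nonneg n)
  then show ?thesis using monomial_of_nat[of n] by simp
next
  case (neg n)
  then show ?thesis by (simp only: of_int_minus of_int_of_nat_eq monomial_uminus monomial_of_nat)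
qed

lemma coef_of_int_mult: "coef (of_int k * f) x = of_int k * coef f x"
  using coef_monomial_mult[of "of_int k" 0 f x] by (simp add: monomial_of_int)

lemma coef_of_int: "coef (of_int k) x = (if x = 0 then of_int k else 0)"
  using coef_of_int_mult[of k 1 x] by (cases "x = 0") (simp_all add: coef_one mn_one_def)

lemma mn_ord_least:
  fixes f :: "'a::linorder \<Rightarrow> 'k::zero"
  assumes "is_MN f" "f \<noteq> (\<lambda>_. 0)"
  shows "mn_ord f \<in> supp f" "\<And>s. s \<in> supp f \<Longrightarrow> mn_ord f \<le> s"
proof -
  have "supp f \<noteq> {}" using assms(2) by (auto simp: supp_def)
  then obtain m where m: "m \<in> supp f" "\<forall>s\<in>supp f. m \<le> s"
    using well_ordered_has_least assms(1) is_MN_iff_well_ordered by blast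
  have "mn_ord f = m" unfolding mn_ord_def
    by (rule Least_equality) (use m in \<open>auto simp: supp_def\<close>)
  then show "mn_ord f \<in> supp f" "\<And>s. s \<in> supp f \<Longrightarrow> mn_ord f \<le> s" using m by auto
qed

lemma mns_factor:
  fixes f :: "('a::linordered_ab_group_add, 'k::field) mns"
  assumes "f \<noteq> 0"
  obtains c h where "c \<noteq> 0" "is_MN h" "supp h \<subseteq> {a. 0 < a}"
    "f = monomial c (mn_ord (coef f)) * (1 + Abs_mns h)"
proof -
  define m where "m = mn_ord (coef f)"
  have "coef f \<noteq> (\<lambda>_. 0)" using assms by (auto simp: mns_eq_iff)
  then have m: "m \<in> supp (coef f)" "\<And>s. s \<in> supp (coef f) \<Longrightarrow> m \<le> s"
    using mn_ord_least is_MN_coef m_def by blast+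
  define c where "c = coef f m"
  have c0: "c \<noteq> 0" using m(1) by (simp add: c_def supp_def)
  define h where "h x = (if x = 0 then 0 else coef f (x + m) / c)" for x
  have supph: "supp h \<subseteq> (\<lambda>x. x + (- m)) ` supp (coef f)"
  proof
    fix x assume "x \<in> supp h"
    then have "coef f (x + m) \<noteq> 0" by (auto simp: h_def supp_def split: if_splits)
    then show "x \<in> (\<lambda>x. x + (- m)) ` supp (coef f)"
      by (intro image_eqI[of _ _ "x + m"]) (simp_all add: supp_def)
  qed
  have mnh: "is_MN h" unfolding is_MN_iff_well_ordered
    using well_ordered_subset[OF well_ordered_translate supph] is_MN_coef is_MN_iff_well_ordered by blast
  have posh: "supp h \<subseteq> {a. 0 < a}"
  proof
    fix x assume x: "x \<in> supp h"
    then have "x \<noteq> 0" "coef f (x + m) \<noteq> 0" by (auto simp: h_def supp_def split: if_splits)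
    then have "m \<le> x + m" using m(2)[of "x + m"] by (simp add: supp_def)
    then show "x \<in> {a. 0 < a}" using \<open>x \<noteq> 0\<close> by auto
  qed
  have "coef f x = coef (monomial c m * (1 + Abs_mns h)) x" for x
    using c0 mnh by (auto simp: coef_monomial_mult Abs_mns_inverse coef_one mn_one_def h_def c_def)
  then show ?thesis using that c0 mnh posh by (simp add: mns_eq_iff m_def)
qed

text \<open>The geometric series \<open>\<Sum>\<^sub>k (-h)\<^sup>k\<close>, collected by exponents.\<close>

definition neumann_series :: "('a::linordered_ab_group_add \<Rightarrow> 'k::field) \<Rightarrow> 'a \<Rightarrow> 'k" where
  "neumann_series h b = (\<Sum>t\<in>lists_with_sum (supp h) b. prod_list (map (\<lambda>x. - h x) t))"

lemma neumann_series_supp: "neumann_series h b \<noteq> 0 \<Longrightarrow> b \<in> sums_of (supp h)"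
proof (rule ccontr)
  assume a: "neumann_series h b \<noteq> 0" "b \<notin> sums_of (supp h)"
  then have "lists_with_sum (supp h) b = {}" unfolding lists_with_sum_def sums_of_def by blast
  then show False using a(1) unfolding neumann_series_def by simp
qed

lemma neumann_series_inverse:
  fixes h :: "'a::linordered_ab_group_add \<Rightarrow> 'k::field"
  assumes mn: "is_MN h" and pos: "supp h \<subseteq> {a. 0 < a}"
  shows "is_MN (neumann_series h)" "mn_mult (\<lambda>x. mn_one x + h x) (neumann_series h) = mn_one"
proof -
  let ?A = "supp h"
  have woA: "well_ordered ?A" using mn by (simp add: is_MN_iff_well_ordered)
  have woS: "well_ordered (sums_of ?A)" using neumann_well_ordered[OF pos woA] .
  show "is_MN (neumann_series h)" unfolding is_MN_iff_well_ordered
    by (rule well_ordered_subset[OF woS]) (use neumann_series_supp[of h] in \<open>auto simp: supp_def\<close>)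
  have h0: "h 0 = 0" using pos by (auto simp: supp_def)
  show "mn_mult (\<lambda>x. mn_one x + h x) (neumann_series h) = mn_one"
  proof
    fix b
    let ?I = "{a\<in>?A. b - a \<in> sums_of ?A}"
    have finI: "finite ?I" using well_ordered_finite_splittings[OF woA woS] .
    have "0 \<notin> ?I" using h0 by (simp add: supp_def)
    have "mn_mult (\<lambda>x. mn_one x + h x) (neumann_series h) b =
        (\<Sum>a\<in>insert 0 ?I. (mn_one a + h a) * neumann_series h (b - a))"
    proof (rule mn_mult_eq_sum)
      show "finite (insert 0 ?I)" using finI by simp
      fix a assume "mn_one a + h a \<noteq> 0" "neumann_series h (b - a) \<noteq> 0"
      then show "a \<in> insert 0 ?I" using neumann_series_supp by (auto simp: mn_one_def supp_def split: if_splits)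
    qed
    also have "\<dots> = neumann_series h b + (\<Sum>a\<in>?I. h a * neumann_series h (b - a))"
      using \<open>0 \<notin> ?I\<close> finI h0
      by (simp add: sum.insert mn_one_def) (rule sum.cong, auto simp: supp_def)
    also have "neumann_series h b = (if b = 0 then 1 else 0) - (\<Sum>a\<in>?I. h a * neumann_series h (b - a))"
      unfolding neumann_series_def
      by (subst sum_lists_with_sum_unfold[OF pos woA]) (simp add: sum_distrib_left sum_negf)
    finally show "mn_mult (\<lambda>x. mn_one x + h x) (neumann_series h) b = mn_one b"
      by (simp add: mn_one_def)
  qed
qed

text \<open>For \<open>t = a # t'\<close> this is \<open>h a\<close> times the coefficient of the word \<open>t'\<close> in the
  geometric series; only its invariance under rearranging \<open>t\<close> matters.\<close>

definition neumann_weight :: "('a \<Rightarrow> 'k::field) \<Rightarrow> 'a list \<Rightarrow> 'k" where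
  "neumann_weight h t = (if t = [] then 1 else - prod_list (map (\<lambda>x. - h x) t))"

lemma neumann_weight_mset:
  fixes h :: "'a \<Rightarrow> 'k::field"
  assumes m: "mset t = mset t'"
  shows "neumann_weight h t = neumann_weight h t'"
proof -
  have "prod_list (map g t) = prod_list (map g t')" for g :: "'a \<Rightarrow> 'k"
    by (metis m mset_map prod_mset_prod_list)
  moreover have "t = [] \<longleftrightarrow> t' = []" using m by (metis mset_zero_iff)
  ultimately show ?thesis unfolding neumann_weight_def by simp
qed

lemma one_plus_mult_neumann_series:
  fixes h :: "'a::linordered_ab_group_add \<Rightarrow> 'k::field"
  assumes "is_MN h" "supp h \<subseteq> {a. 0 < a}"
  shows "(1 + Abs_mns h) * Abs_mns (neumann_series h) = 1"
proof -
  have "coef (1 + Abs_mns h) = (\<lambda>x. mn_one x + h x)"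
    using assms(1) by (simp add: fun_eq_iff Abs_mns_inverse coef_one)
  then have "coef ((1 + Abs_mns h) * Abs_mns (neumann_series h)) = mn_mult (\<lambda>x. mn_one x + h x) (neumann_series h)"
    using neumann_series_inverse(1)[OF assms] by (simp add: coef_mult Abs_mns_inverse)
  then show ?thesis using neumann_series_inverse(2)[OF assms] by (simp add: mns_eq_iff coef_one)
qed

lemma mns_right_inverse_ex:
  fixes f :: "('a::linordered_ab_group_add, 'k::field) mns"
  assumes "f \<noteq> 0"
  shows "\<exists>g. f * g = 1"
proof -
  obtain c h where c: "c \<noteq> 0" and h: "is_MN h" "supp h \<subseteq> {a. 0 < a}"
    and f: "f = monomial c (mn_ord (coef f)) * (1 + Abs_mns h)"
    using mns_factor[OF assms] by blast
  let ?m = "mn_ord (coef f)"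
  have "f * (monomial (inverse c) (- ?m) * Abs_mns (neumann_series h)) =
      (monomial c ?m * monomial (inverse c) (- ?m)) * ((1 + Abs_mns h) * Abs_mns (neumann_series h))"
    by (subst f) (simp only: ac_simps)
  also have "\<dots> = 1" using c by (simp add: one_plus_mult_neumann_series[OF h] monomial_mult monomial_one)
  finally show ?thesis by blast
qed

instantiation mns :: (linordered_ab_group_add, field) field
begin

definition inverse_mns :: "('a, 'b) mns \<Rightarrow> ('a, 'b) mns" where
  "inverse_mns f = (if f = 0 then 0 else (SOME g. f * g = 1))"

definition divide_mns :: "('a, 'b) mns \<Rightarrow> ('a, 'b) mns \<Rightarrow> ('a, 'b) mns" where
  "divide_mns f g = f * inverse g"

instance
proof
  fix a b :: "('a, 'b) mns"
  show "a \<noteq> 0 \<Longrightarrow> inverse a * a = 1"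
    using someI_ex[OF mns_right_inverse_ex[of a]] by (simp add: inverse_mns_def mult.commute)
  show "a div b = a * inverse b" by (simp add: divide_mns_def)
  show "inverse 0 = (0 :: ('a, 'b) mns)" by (simp add: inverse_mns_def)
qed

end

lemma mn_inv_coef:
  fixes f :: "('a::linordered_ab_group_add, 'k::field) mns"
  assumes "f \<noteq> 0"
  shows "mn_inv (coef f) = coef (inverse f)"
  unfolding mn_inv_def
proof (rule the_equality)
  show "is_MN (coef (inverse f)) \<and> mn_mult (coef f) (coef (inverse f)) = mn_one"
    using assms by (simp add: is_MN_coef coef_mult[symmetric] coef_one)
  fix h assume h: "is_MN h \<and> mn_mult (coef f) h = mn_one"
  then have "f * Abs_mns h = 1" by (simp add: mns_eq_iff coef_mult Abs_mns_inverse coef_one)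
  then have "Abs_mns h = inverse f" using assms by (metis inverse_unique)
  then show "h = coef (inverse f)" using h by (metis Abs_mns_inverse mem_Collect_eq)
qed

section \<open>Grading by the lattice of exponents\<close>

lemma sum_lessThan_const_add: "(\<Sum>_<(p::nat) + q. (a::'a::ab_group_add)) = (\<Sum>_<p. a) + (\<Sum>_<q. a)"
proof (induction q)
  case 0 then show ?case by simp
next
  case (Suc q)
  have "(\<Sum>_<p + Suc q. a) = (\<Sum>_<p + q. a) + a" by (simp add: add_Suc_right)
  then show ?case using Suc by (simp add: algebra_simps)
qed

lemma zmult_diff: "zmult (int p - int q) (a::'a::ab_group_add) = (\<Sum>_<p. a) - (\<Sum>_<q. a)"
proof (cases "q \<le> p")
  case True
  then have e: "int p - int q = int (p - q)" by simp
  have "(\<Sum>_<p. a) = (\<Sum>_<(p - q) + q. a)" using True by simp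
  also have "\<dots> = (\<Sum>_<p - q. a) + (\<Sum>_<q. a)" by (rule sum_lessThan_const_add)
  finally show ?thesis unfolding zmult_def e by simp
next
  case False
  then have e: "int p - int q = - int (q - p)" by simp
  have e2: "nat (int (q - p)) = q - p" by simp
  have "(\<Sum>_<q. a) = (\<Sum>_<(q - p) + p. a)" using False by simp
  also have "\<dots> = (\<Sum>_<q - p. a) + (\<Sum>_<p. a)" by (rule sum_lessThan_const_add)
  finally have "(\<Sum>_<q. a) = (\<Sum>_<q - p. a) + (\<Sum>_<p. a)" .
  moreover have "zmult (int p - int q) a = - (\<Sum>_<q - p. a)"
    unfolding zmult_def e using False by (simp only: e2 minus_minus, simp)
  ultimately show ?thesis by (simp add: algebra_simps)
qed

lemma zmult_add: "zmult (k + l) (a::'a::ab_group_add) = zmult k a + zmult l a"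
proof -
  have ek: "int (nat k) - int (nat (- k)) = k" and el: "int (nat l) - int (nat (- l)) = l" by simp_all
  have ekl: "int (nat k + nat l) - int (nat (- k) + nat (- l)) = k + l" by simp
  have z1: "zmult k a = (\<Sum>_<nat k. a) - (\<Sum>_<nat (- k). a)"
    using zmult_diff[of "nat k" "nat (- k)" a] unfolding ek .
  have z2: "zmult l a = (\<Sum>_<nat l. a) - (\<Sum>_<nat (- l). a)"
    using zmult_diff[of "nat l" "nat (- l)" a] unfolding el .
  have z3: "zmult (k + l) a = (\<Sum>_<nat k + nat l. a) - (\<Sum>_<nat (- k) + nat (- l). a)"
    using zmult_diff[of "nat k + nat l" "nat (- k) + nat (- l)" a] unfolding ekl .
  show ?thesis unfolding z3 z1 z2 sum_lessThan_const_add by (simp add: algebra_simps)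
qed

lemma zmult_zero [simp]: "zmult 0 a = 0"
  by (simp add: zmult_def)

lemma zmult_uminus: "zmult (- k) (a::'a::ab_group_add) = - zmult k a"
  using zmult_add[of "- k" k a] by (simp add: eq_neg_iff_add_eq_0)

lemma zmult_one: "zmult 1 a = a"
  by (simp add: zmult_def)

lemma hvec_add: "hvec n eps (\<lambda>i. k i + l i) = hvec n eps k + hvec n eps l"
  by (simp add: hvec_def zmult_add sum.distrib)

lemma hvec_zero: "hvec n eps (\<lambda>i. 0) = 0"
  by (simp add: hvec_def)

lemma hvec_minus_one: "hvec n eps (\<lambda>i. if i < n then -1 else 0) = - (\<Sum>i<n. eps i)"
  by (simp add: hvec_def zmult_uminus zmult_one sum_negf)

locale decomposed_group =
  fixes G :: "'a::linordered_ab_group_add set" and n :: nat and eps :: "nat \<Rightarrow> 'a"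
  assumes decomp: "direct_sum_decomp G n eps"
begin

abbreviation "xd \<equiv> xdeg G n eps"

lemma zero_in_G: "0 \<in> G"
  and add_in_G: "a \<in> G \<Longrightarrow> b \<in> G \<Longrightarrow> a + b \<in> G"
  using decomp unfolding direct_sum_decomp_def by blast+

lemma decomposition_unique: "\<exists>!p. fst p \<in> G \<and> snd p \<in> exps n \<and> x = fst p + hvec n eps (snd p)"
  using decomp unfolding direct_sum_decomp_def by blast

lemma xd_decomposition: "\<exists>g\<in>G. xd x \<in> exps n \<and> x = g + hvec n eps (xd x)"
proof -
  obtain p where p: "fst p \<in> G \<and> snd p \<in> exps n \<and> x = fst p + hvec n eps (snd p)"
    and u: "\<And>q. fst q \<in> G \<and> snd q \<in> exps n \<and> x = fst q + hvec n eps (snd q) \<Longrightarrow> q = p"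
    using decomposition_unique[of x] by (elim ex1E) blast
  have "(THE p. fst p \<in> G \<and> snd p \<in> exps n \<and> x = fst p + hvec n eps (snd p)) = p"
    by (rule the_equality) (use p u in blast)+
  then have "xd x = snd p" unfolding xdeg_def by simp
  then show ?thesis using p by (intro bexI[of _ "fst p"]) auto
qed

lemma xd_eq: assumes "g \<in> G" "k \<in> exps n" shows "xd (g + hvec n eps k) = k"
proof -
  have "(THE p. fst p \<in> G \<and> snd p \<in> exps n \<and> g + hvec n eps k = fst p + hvec n eps (snd p)) = (g, k)"
    by (rule the1_equality[OF decomposition_unique]) (use assms in simp)
  then show ?thesis unfolding xdeg_def by simp
qed

lemma exps_add: "k \<in> exps n \<Longrightarrow> l \<in> exps n \<Longrightarrow> (\<lambda>i. k i + l i) \<in> exps n"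
  by (simp add: exps_def)

lemma xd_add: "xd (a + b) = (\<lambda>i. xd a i + xd b i)"
proof -
  obtain g1 where g1: "g1 \<in> G" "xd a \<in> exps n" "a = g1 + hvec n eps (xd a)" using xd_decomposition by blast
  obtain g2 where g2: "g2 \<in> G" "xd b \<in> exps n" "b = g2 + hvec n eps (xd b)" using xd_decomposition by blast
  have "a + b = (g1 + g2) + hvec n eps (\<lambda>i. xd a i + xd b i)"
    by (subst g1(3), subst g2(3)) (simp add: hvec_add algebra_simps)
  then show ?thesis using xd_eq[OF add_in_G[OF g1(1) g2(1)] exps_add[OF g1(2) g2(2)]] by simp
qed

lemma xd_zero: "xd 0 = (\<lambda>i. 0)"
  using xd_eq[OF zero_in_G, of "\<lambda>i. 0"] by (simp add: hvec_zero exps_def)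

lemma xd_in_G: "x \<in> G \<Longrightarrow> xd x = (\<lambda>i. 0)"
  using xd_eq[of x "\<lambda>i. 0"] by (simp add: hvec_zero exps_def)

lemma xd_exps: "xd x \<in> exps n" using xd_decomposition by blast

lemma xd_sum_list: "xd (sum_list t) = (\<lambda>i. sum_list (map (\<lambda>x. xd x i) t))"
  by (induction t) (simp_all add: xd_zero xd_add)

lemma is_MN_xcomp:
  assumes "is_MN f"
  shows "is_MN (xcomp G n eps f k)"
proof -
  have "supp (xcomp G n eps f k) \<subseteq> supp f" by (auto simp: supp_def xcomp_def)
  then show ?thesis using assms well_ordered_subset unfolding is_MN_iff_well_ordered by blast
qed

lemma mn_ord_xcomp:
  assumes "is_MN f" "xcomp G n eps f k \<noteq> (\<lambda>_. 0)"
  shows "mn_ord (xcomp G n eps f k) \<in> supp f \<and> xd (mn_ord (xcomp G n eps f k)) = k"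
  using mn_ord_least(1)[OF is_MN_xcomp[OF assms(1)] assms(2)]
  by (auto simp: supp_def xcomp_def split: if_splits)

lemma xcomp_at_mn_ord:
  assumes mn: "is_MN f" and nz: "f \<noteq> (\<lambda>_. 0)"
  shows "xcomp G n eps f (xd (mn_ord f)) \<noteq> (\<lambda>_. 0)" "mn_ord (xcomp G n eps f (xd (mn_ord f))) = mn_ord f"
proof -
  define m where "m = mn_ord f"
  have m: "m \<in> supp f" "\<forall>s\<in>supp f. m \<le> s" using mn_ord_least[OF mn nz] m_def by auto
  show c0: "xcomp G n eps f (xd (mn_ord f)) \<noteq> (\<lambda>_. 0)"
  proof
    assume "xcomp G n eps f (xd (mn_ord f)) = (\<lambda>_. 0)"
    then have "xcomp G n eps f (xd m) m = 0" by (simp add: m_def)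
    then show False using m(1) by (simp add: xcomp_def supp_def)
  qed
  have "m \<in> supp (xcomp G n eps f (xd m))" using m(1) by (simp add: supp_def xcomp_def)
  then have "mn_ord (xcomp G n eps f (xd m)) \<le> m"
    using mn_ord_least(2)[OF is_MN_xcomp[OF mn] c0] by (simp add: m_def)
  moreover have "m \<le> mn_ord (xcomp G n eps f (xd m))"
    using m(2) mn_ord_xcomp[OF mn c0] by (simp add: m_def)
  ultimately show "mn_ord (xcomp G n eps f (xd (mn_ord f))) = mn_ord f" by (simp add: m_def)
qed

lemma x_init_exp_eq:
  assumes mn: "is_MN f" and nz: "f \<noteq> (\<lambda>_. 0)"
  shows "x_init_exp G n eps f = xd (mn_ord f)"
proof -
  define m where "m = mn_ord f"
  have m: "\<forall>s\<in>supp f. m \<le> s" using mn_ord_least[OF mn nz] m_def by auto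
  note c0 = xcomp_at_mn_ord(1)[OF mn nz, folded m_def]
    and ordm = xcomp_at_mn_ord(2)[OF mn nz, folded m_def]
  note ordc = mn_ord_xcomp[OF mn]
  show ?thesis
    unfolding x_init_exp_def m_def[symmetric]
  proof (rule the_equality)
    show "xd m \<in> exps n \<and> xcomp G n eps f (xd m) \<noteq> (\<lambda>_. 0) \<and>
          (\<forall>k'\<in>exps n. xcomp G n eps f k' \<noteq> (\<lambda>_. 0) \<longrightarrow>
             mn_ord (xcomp G n eps f (xd m)) \<le> mn_ord (xcomp G n eps f k'))"
      using xd_exps c0 ordm ordc m by auto
  next
    fix k assume k: "k \<in> exps n \<and> xcomp G n eps f k \<noteq> (\<lambda>_. 0) \<and>
          (\<forall>k'\<in>exps n. xcomp G n eps f k' \<noteq> (\<lambda>_. 0) \<longrightarrow>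
             mn_ord (xcomp G n eps f k) \<le> mn_ord (xcomp G n eps f k'))"
    then have "mn_ord (xcomp G n eps f k) \<le> m" using xd_exps c0 ordm by auto
    moreover have "m \<le> mn_ord (xcomp G n eps f k)" using ordc k m by blast
    ultimately have "mn_ord (xcomp G n eps f k) = m" by simp
    then show "k = xd m" using ordc k by metis
  qed
qed

lemma xd_sum: "xd (\<Sum>i\<in>I. a i) = (\<lambda>j. \<Sum>i\<in>I. xd (a i) j)"
  by (induction I rule: infinite_finite_induct) (simp_all add: xd_zero xd_add)

lift_definition euler :: "nat \<Rightarrow> ('a, 'k::field) mns \<Rightarrow> ('a, 'k) mns" is
  "\<lambda>j f x. of_int (xdeg G n eps x j) * f x"
proof -
  fix j and f :: "'a \<Rightarrow> 'k" assume "is_MN f"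
  moreover have "supp (\<lambda>x. of_int (xdeg G n eps x j) * f x) \<subseteq> supp f" by (auto simp: supp_def)
  ultimately show "is_MN (\<lambda>x. of_int (xdeg G n eps x j) * f x)"
    unfolding is_MN_iff_well_ordered using well_ordered_subset by blast
qed

lift_definition partial :: "nat \<Rightarrow> ('a, 'k::field) mns \<Rightarrow> ('a, 'k) mns" is
  "\<lambda>j f. mn_deriv G n eps j f"
proof -
  fix j and f :: "'a \<Rightarrow> 'k" assume "is_MN f"
  then have "well_ordered ((\<lambda>x. x + (- eps j)) ` supp f)" using well_ordered_translate is_MN_iff_well_ordered by blast
  moreover have "supp (mn_deriv G n eps j f) \<subseteq> (\<lambda>x. x + (- eps j)) ` supp f"
  proof
    fix x assume "x \<in> supp (mn_deriv G n eps j f)"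
    then have "f (x + eps j) \<noteq> 0" by (auto simp: supp_def mn_deriv_def)
    then show "x \<in> (\<lambda>x. x + (- eps j)) ` supp f"
      by (intro image_eqI[of _ _ "x + eps j"]) (simp_all add: supp_def)
  qed
  ultimately show "is_MN (mn_deriv G n eps j f)" unfolding is_MN_iff_well_ordered using well_ordered_subset by blast
qed

lemma monomial_mult_partial: "monomial 1 (eps j) * partial j f = euler j f"
  by (simp add: mns_eq_iff coef_monomial_mult partial.rep_eq euler.rep_eq mn_deriv_def)

lemma euler_add: "euler j (f + g) = euler j f + euler j g"
  by (simp add: mns_eq_iff euler.rep_eq algebra_simps)

lemma euler_one: "euler j 1 = 0"
  by (simp add: mns_eq_iff euler.rep_eq coef_one mn_one_def xd_zero)

lemma euler_monomial_mult: "euler j (monomial c m * f) = monomial c m * (of_int (xd m j) * f + euler j f)"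
proof -
  have "coef (euler j (monomial c m * f)) x = coef (monomial c m * (of_int (xd m j) * f + euler j f)) x" for x
  proof -
    have "xd x j = xd m j + xd (x - m) j" using xd_add[of m "x - m"] by simp
    then show ?thesis by (simp only: euler.rep_eq coef_monomial_mult coef_add coef_of_int_mult) (simp add: algebra_simps)
  qed
  then show ?thesis by (simp add: mns_eq_iff)
qed

lemma euler_div_monomial_mult:
  fixes H W :: "('a, 'k::field) mns"
  assumes "c \<noteq> 0" "(1 + H) * W = 1"
  shows "euler j (monomial c m * (1 + H)) * inverse (monomial c m * (1 + H)) = of_int (xd m j) + euler j H * W"
proof -
  have "coef (monomial c m) m \<noteq> 0" using assms(1) by (simp add: monomial.rep_eq)
  then have mon0: "monomial c m \<noteq> 0" by auto
  have inv: "inverse (1 + H) = W" using assms(2) by (metis inverse_unique)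
  have "euler j (monomial c m * (1 + H)) * inverse (monomial c m * (1 + H)) =
      (monomial c m * inverse (monomial c m)) * ((of_int (xd m j) * (1 + H) + euler j H) * W)"
    unfolding euler_monomial_mult euler_add euler_one inv[symmetric]
    by (simp add: inverse_mult_distrib ac_simps)
  also have "\<dots> = of_int (xd m j) * ((1 + H) * W) + euler j H * W"
    using mon0 by (simp add: distrib_right mult.assoc)
  finally show ?thesis using assms(2) by simp
qed

lemma coef_euler_div:
  fixes f :: "('a, 'k::field) mns"
  assumes f: "f = monomial c m * (1 + Abs_mns h)" and c: "c \<noteq> 0"
    and h: "is_MN h" "supp h \<subseteq> {a. 0 < a}"
  shows "coef (euler j f * inverse f) b =
    (\<Sum>t\<in>lists_with_sum (supp h) b. neumann_weight h t * of_int (if t = [] then xd m j else xd (hd t) j))"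
proof -
  let ?A = "supp h"
  define H where "H = Abs_mns h"
  define W where "W = Abs_mns (neumann_series h)"
  have cH: "coef H = h" unfolding H_def using h by (simp add: Abs_mns_inverse)
  have cW: "coef W = neumann_series h" unfolding W_def using neumann_series_inverse[OF h] by (simp add: Abs_mns_inverse)
  have HW: "(1 + H) * W = 1" unfolding H_def W_def by (rule one_plus_mult_neumann_series[OF h])
  have woA: "well_ordered ?A" using h by (simp add: is_MN_iff_well_ordered)
  have woS: "well_ordered (sums_of ?A)" using neumann_well_ordered[OF h(2) woA] .
  define X where "X = {a\<in>?A. b - a \<in> sums_of ?A}"
  have finX: "finite X" unfolding X_def using well_ordered_finite_splittings[OF woA woS] .
  have "coef (euler j H * W) b = (\<Sum>a\<in>X. coef (euler j H) a * neumann_series h (b - a))"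
    unfolding coef_mult cW
  proof (rule mn_mult_eq_sum[OF finX])
    fix a assume a: "coef (euler j H) a \<noteq> 0" "neumann_series h (b - a) \<noteq> 0"
    then have "h a \<noteq> 0" by (auto simp: euler.rep_eq cH)
    then show "a \<in> X" using neumann_series_supp[OF a(2)] by (simp add: X_def supp_def)
  qed
  also have "\<dots> = (\<Sum>a\<in>X. \<Sum>t\<in>lists_with_sum ?A (b - a). neumann_weight h (a # t) * of_int (xd (hd (a # t)) j))"
    by (simp add: euler.rep_eq cH neumann_series_def neumann_weight_def sum_distrib_left algebra_simps)
  also have "\<dots> = (\<Sum>t\<in>lists_with_sum ?A b. neumann_weight h t * of_int (if t = [] then xd m j else xd (hd t) j))
      - (if b = 0 then of_int (xd m j) else 0)"
    unfolding X_def by (subst sum_lists_with_sum_unfold[OF h(2) woA]) (simp add: neumann_weight_def)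
  finally show ?thesis
    using euler_div_monomial_mult[OF c HW, of j m] by (simp add: f H_def[symmetric] coef_of_int)
qed


end

section \<open>Coefficients of finite products\<close>

definition tuples_with_sum :: "(nat \<Rightarrow> 'a set) \<Rightarrow> nat \<Rightarrow> 'a::comm_monoid_add \<Rightarrow> (nat \<Rightarrow> 'a) set" where
  "tuples_with_sum S n x = {b \<in> PiE {..<n} S. (\<Sum>i<n. b i) = x}"

definition tuple_sums :: "(nat \<Rightarrow> 'a set) \<Rightarrow> nat \<Rightarrow> 'a::comm_monoid_add set" where
  "tuple_sums S n = (\<lambda>b. \<Sum>i<n. b i) ` PiE {..<n} S"

lemma tuples_with_sum_0: "tuples_with_sum S 0 x = (if x = 0 then {\<lambda>_. undefined} else {})"
  by (auto simp: tuples_with_sum_def)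

lemma tuples_with_sum_empty: "x \<notin> tuple_sums S n \<Longrightarrow> tuples_with_sum S n x = {}"
  by (auto simp: tuples_with_sum_def tuple_sums_def)

lemma PiE_lessThan_Suc_decompose:
  assumes "b \<in> PiE {..<Suc n} S"
  shows "b(n := undefined) \<in> PiE {..<n} S" "b n \<in> S n"
    "(\<Sum>i<n. (b(n := undefined)) i) = (\<Sum>i<n. b i)"
  using assms by (auto simp: PiE_def extensional_def Pi_def intro: sum.cong)

lemma tuple_sums_Suc_subset: "tuple_sums S (Suc n) \<subseteq> tuple_sums S n + S n"
proof
  fix y assume "y \<in> tuple_sums S (Suc n)"
  then obtain b where b: "b \<in> PiE {..<Suc n} S" "y = (\<Sum>i<Suc n. b i)"
    unfolding tuple_sums_def by blast
  then have "(\<Sum>i<n. b i) \<in> tuple_sums S n"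
    using PiE_lessThan_Suc_decompose[OF b(1)] unfolding tuple_sums_def by (metis image_eqI)
  then show "y \<in> tuple_sums S n + S n"
    using b PiE_lessThan_Suc_decompose(2)[OF b(1)] by (auto intro: set_plus_intro)
qed

lemma well_ordered_tuple_sums:
  fixes S :: "nat \<Rightarrow> 'a::linordered_ab_group_add set"
  shows "(\<And>i. i < n \<Longrightarrow> well_ordered (S i)) \<Longrightarrow> well_ordered (tuple_sums S n)"
proof (induction n)
  case 0
  show ?case by (rule finite_imp_well_ordered) (simp add: tuple_sums_def)
next
  case (Suc n)
  then have "well_ordered (tuple_sums S n + S n)" by (simp add: well_ordered_set_plus)
  then show ?case using well_ordered_subset[OF _ tuple_sums_Suc_subset] by blast
qed

lemma tuples_with_sum_Suc:
  fixes S :: "nat \<Rightarrow> 'a::ab_group_add set"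
  shows "tuples_with_sum S (Suc n) x =
     (\<lambda>(a, b). b(n := x - a)) ` Sigma {a \<in> tuple_sums S n. x - a \<in> S n} (tuples_with_sum S n)"
    (is "_ = ?f ` Sigma ?Y ?T")
proof (intro equalityI subsetI)
  fix b assume "b \<in> tuples_with_sum S (Suc n) x"
  then have b: "b \<in> PiE {..<Suc n} S" "(\<Sum>i<Suc n. b i) = x" by (auto simp: tuples_with_sum_def)
  note b' = PiE_lessThan_Suc_decompose[OF b(1)]
  let ?a = "\<Sum>i<n. b i"
  have bn: "x - ?a = b n" using b(2) by (simp add: algebra_simps)
  have "?a \<in> tuple_sums S n"
    unfolding tuple_sums_def by (intro image_eqI[where x = "b(n := undefined)"] b'(1)) (simp add: b'(3))
  then have "(?a, b(n := undefined)) \<in> Sigma ?Y ?T"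
    using b' bn by (simp add: tuples_with_sum_def)
  moreover have "b = ?f (?a, b(n := undefined))" by (simp add: bn)
  ultimately show "b \<in> ?f ` Sigma ?Y ?T" by (rule rev_image_eqI)
next
  fix c assume "c \<in> ?f ` Sigma ?Y ?T"
  then obtain p where p: "p \<in> Sigma ?Y ?T" "c = ?f p" by (rule imageE)
  obtain a b where "p = (a, b)" by (cases p)
  then have ab: "(a, b) \<in> Sigma ?Y ?T" "c = b(n := x - a)" using p by simp_all
  then have b: "x - a \<in> S n" "b \<in> PiE {..<n} S" "(\<Sum>i<n. b i) = a"
    by (auto simp: tuples_with_sum_def)
  have "(\<Sum>i<n. (b(n := x - a)) i) = (\<Sum>i<n. b i)" by (rule sum.cong) auto
  moreover have "b(n := x - a) \<in> PiE {..<Suc n} S"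
    using b(1,2) by (auto simp: PiE_def extensional_def Pi_def)
  ultimately show "c \<in> tuples_with_sum S (Suc n) x" using ab(2) b(3) by (simp add: tuples_with_sum_def)
qed

lemma inj_on_tuples_with_sum_Suc:
  fixes S :: "nat \<Rightarrow> 'a::ab_group_add set"
  shows "inj_on (\<lambda>(a, b). b(n := x - a)) (Sigma A (tuples_with_sum S n))"
proof (rule inj_onI, clarify)
  fix a b a' b'
  assume b: "b \<in> tuples_with_sum S n a" "b' \<in> tuples_with_sum S n a'"
    and eq: "b(n := x - a) = b'(n := x - a')"
  have "b n = b' n" using b by (simp add: tuples_with_sum_def PiE_def extensional_def)
  then have "b = b'" using eq by (metis fun_upd_triv fun_upd_upd)
  moreover have "x - a = x - a'" using fun_cong[OF eq, of n] by simp
  ultimately show "a = a' \<and> b = b'" by simp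
qed

lemma finite_tuples_with_sum:
  fixes S :: "nat \<Rightarrow> 'a::linordered_ab_group_add set"
  assumes "\<And>i. i < n \<Longrightarrow> well_ordered (S i)"
  shows "finite (tuples_with_sum S n x)"
  using assms
proof (induction n arbitrary: x)
  case 0
  then show ?case by (simp add: tuples_with_sum_0)
next
  case (Suc n)
  have "finite {a \<in> tuple_sums S n. x - a \<in> S n}"
    by (rule well_ordered_finite_splittings[OF well_ordered_tuple_sums]) (simp_all add: Suc.prems)
  then show ?case using Suc by (simp add: tuples_with_sum_Suc)
qed

lemma coef_prod:
  fixes f :: "nat \<Rightarrow> ('a::linordered_ab_group_add, 'k::field) mns"
  assumes "\<And>i. i < n \<Longrightarrow> well_ordered (S i)" "\<And>i. i < n \<Longrightarrow> supp (coef (f i)) \<subseteq> S i"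
  shows "coef (\<Prod>i<n. f i) x = (\<Sum>b\<in>tuples_with_sum S n x. \<Prod>i<n. coef (f i) (b i))"
  using assms
proof (induction n arbitrary: x)
  case 0
  then show ?case by (simp add: tuples_with_sum_0 coef_one mn_one_def)
next
  case (Suc n)
  let ?Y = "{a \<in> tuple_sums S n. x - a \<in> S n}"
  let ?T = "tuples_with_sum S n"
  have finY: "finite ?Y"
    by (rule well_ordered_finite_splittings[OF well_ordered_tuple_sums]) (simp_all add: Suc.prems)
  have finT: "finite (?T a)" for a by (rule finite_tuples_with_sum) (simp add: Suc.prems)
  have IH: "coef (\<Prod>i<n. f i) a = (\<Sum>b\<in>?T a. \<Prod>i<n. coef (f i) (b i))" for a
    using Suc by simp
  have "coef (\<Prod>i<Suc n. f i) x = (\<Sum>a\<in>?Y. coef (\<Prod>i<n. f i) a * coef (f n) (x - a))"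
    unfolding prod.lessThan_Suc coef_mult
  proof (rule mn_mult_eq_sum[OF finY])
    fix a assume a: "coef (\<Prod>i<n. f i) a \<noteq> 0" "coef (f n) (x - a) \<noteq> 0"
    then have "a \<in> tuple_sums S n" using IH[of a] tuples_with_sum_empty by fastforce
    moreover have "x - a \<in> S n" using a(2) Suc.prems(2)[of n] by (auto simp: supp_def)
    ultimately show "a \<in> ?Y" by simp
  qed
  also have "\<dots> = (\<Sum>(a, b)\<in>Sigma ?Y ?T. (\<Prod>i<n. coef (f i) (b i)) * coef (f n) (x - a))"
    by (simp add: IH sum_distrib_right sum.Sigma[OF finY] finT)
  also have "\<dots> = (\<Sum>(a, b)\<in>Sigma ?Y ?T. \<Prod>i<Suc n. coef (f i) ((b(n := x - a)) i))"
    by (intro sum.cong refl) (auto intro!: prod.cong)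
  also have "\<dots> = (\<Sum>b\<in>tuples_with_sum S (Suc n) x. \<Prod>i<Suc n. coef (f i) (b i))"
    unfolding tuples_with_sum_Suc
    by (subst sum.reindex[OF inj_on_tuples_with_sum_Suc]) (simp add: case_prod_beta)
  finally show ?case .
qed

section \<open>Leibniz determinants\<close>

definition leibniz_det :: "nat \<Rightarrow> (nat \<Rightarrow> nat \<Rightarrow> 'r::comm_ring_1) \<Rightarrow> 'r" where
  "leibniz_det n R = (\<Sum>p\<in>{p. p permutes {..<n}}. of_int (sign p) * (\<Prod>i<n. R i (p i)))"

lemma leibniz_det_eq_det: "leibniz_det n R = det (mat n n (\<lambda>(i, j). R i j))"
  unfolding leibniz_det_def det_def by (simp add: atLeast0LessThan)

lemma leibniz_det_cong:
  "(\<And>i j. i < n \<Longrightarrow> j < n \<Longrightarrow> R i j = R' i j) \<Longrightarrow> leibniz_det n R = leibniz_det n R'"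
  unfolding leibniz_det_def
  by (rule sum.cong[OF refl], rule arg_cong[of _ _ "\<lambda>x. _ * x"], rule prod.cong)
     (auto dest: permutes_in_image)

lemma leibniz_det_identical_rows:
  fixes R :: "nat \<Rightarrow> nat \<Rightarrow> 'r::comm_ring_1"
  assumes "i < n" "i' < n" "i \<noteq> i'" "\<And>j. j < n \<Longrightarrow> R i j = R i' j"
  shows "leibniz_det n R = 0"
  unfolding leibniz_det_eq_det
  by (rule det_identical_rows[of _ n i i']) (use assms in \<open>auto simp: row_def\<close>)

lemma leibniz_det_scale_rows:
  fixes R :: "nat \<Rightarrow> nat \<Rightarrow> 'r::comm_ring_1"
  shows "leibniz_det n (\<lambda>i j. c i * R i j) = (\<Prod>i<n. c i) * leibniz_det n R"
  unfolding leibniz_det_def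
  by (simp add: prod.distrib sum_distrib_left algebra_simps)

lemma leibniz_det_row_sum:
  fixes R :: "nat \<Rightarrow> nat \<Rightarrow> 'r::comm_ring_1"
  assumes "i0 < n" "finite S"
  shows "leibniz_det n (R(i0 := (\<lambda>j. \<Sum>i\<in>S. R i j))) = (\<Sum>i\<in>S. leibniz_det n (R(i0 := R i)))"
proof -
  have *: "(\<Prod>l<n. (R(i0 := v)) l (p l)) = v (p i0) * (\<Prod>l\<in>{..<n} - {i0}. R l (p l))" for v p
  proof -
    have "(\<Prod>l<n. (R(i0 := v)) l (p l)) = (R(i0 := v)) i0 (p i0) * (\<Prod>l\<in>{..<n} - {i0}. (R(i0 := v)) l (p l))"
      using assms(1) by (subst prod.remove[of _ i0]) auto
    also have "(\<Prod>l\<in>{..<n} - {i0}. (R(i0 := v)) l (p l)) = (\<Prod>l\<in>{..<n} - {i0}. R l (p l))"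
      by (rule prod.cong) auto
    finally show ?thesis by simp
  qed
  show ?thesis
    unfolding leibniz_det_def * using assms(2)
    by (simp add: sum_distrib_right sum_distrib_left algebra_simps sum.swap[of _ S])
qed

lemma leibniz_det_zero_row:
  fixes R :: "nat \<Rightarrow> nat \<Rightarrow> 'r::comm_ring_1"
  assumes "i0 < n" "\<And>j. j < n \<Longrightarrow> R i0 j = 0"
  shows "leibniz_det n R = 0"
proof -
  have "(\<Prod>i<n. R i (p i)) = 0" if "p permutes {..<n}" for p
  proof (rule prod_zero)
    have "p i0 < n" using permutes_in_image[OF that] assms(1) by simp
    then show "\<exists>a\<in>{..<n}. R a (p a) = 0" using assms by (intro bexI[of _ i0]) auto
  qed simp
  then show ?thesis unfolding leibniz_det_def by simp
qed

lemma leibniz_det_rows_sum_zero: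
  fixes R :: "nat \<Rightarrow> nat \<Rightarrow> 'r::comm_ring_1"
  assumes S: "S \<subseteq> {..<n}" "S \<noteq> {}" and sum0: "\<And>j. j < n \<Longrightarrow> (\<Sum>i\<in>S. R i j) = 0"
  shows "leibniz_det n R = 0"
proof -
  obtain i0 where i0: "i0 \<in> S" using S(2) by blast
  have i0n: "i0 < n" using i0 S(1) by blast
  have fin: "finite S" using S(1) finite_subset by blast
  have "0 = leibniz_det n (R(i0 := (\<lambda>j. \<Sum>i\<in>S. R i j)))"
    by (rule sym, rule leibniz_det_zero_row[OF i0n]) (simp add: sum0)
  also have "\<dots> = (\<Sum>i\<in>S. leibniz_det n (R(i0 := R i)))" by (rule leibniz_det_row_sum[OF i0n fin])
  also have "\<dots> = leibniz_det n (R(i0 := R i0)) + (\<Sum>i\<in>S - {i0}. leibniz_det n (R(i0 := R i)))"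
    using fin i0 by (simp add: sum.remove)
  also have "(\<Sum>i\<in>S - {i0}. leibniz_det n (R(i0 := R i))) = 0"
  proof (rule sum.neutral, rule ballI)
    fix i assume i: "i \<in> S - {i0}"
    then have "i < n" "i \<noteq> i0" using S(1) by auto
    then show "leibniz_det n (R(i0 := R i)) = 0"
      by (intro leibniz_det_identical_rows[of i0 n i]) (use i0n in auto)
  qed
  finally show ?thesis by simp
qed

lemma leibniz_det_sum_PiE_rows:
  assumes "\<And>i. i < n \<Longrightarrow> finite (T i)"
  shows "(\<Sum>\<tau>\<in>PiE {..<n} T. leibniz_det n (\<lambda>i j. r i (\<tau> i) j)) =
    leibniz_det n (\<lambda>i j. \<Sum>t\<in>T i. r i t j)"
proof -
  have "(\<Sum>\<tau>\<in>PiE {..<n} T. leibniz_det n (\<lambda>i j. r i (\<tau> i) j)) =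
      (\<Sum>p\<in>{p. p permutes {..<n}}. of_int (sign p) * (\<Sum>\<tau>\<in>PiE {..<n} T. \<Prod>i<n. r i (\<tau> i) (p i)))"
    unfolding leibniz_det_def by (simp add: sum_distrib_left sum.swap[of _ "{p. p permutes {..<n}}"])
  also have "\<dots> = leibniz_det n (\<lambda>i j. \<Sum>t\<in>T i. r i t j)"
    unfolding leibniz_det_def by (subst prod_sum_PiE) (use assms in auto)
  finally show ?thesis .
qed

section \<open>Cancellation over rearrangements of words\<close>

lemma sum_permutations_of_multiset_nth:
  assumes "q < size M"
  shows "(\<Sum>t\<in>permutations_of_multiset M. f (t ! 0)) = (\<Sum>t\<in>permutations_of_multiset M. f (t ! q))"
proof -
  let ?P = "permutations_of_multiset M"
  define sw where "sw t = (t[0 := t ! q])[q := t ! 0]" for t :: "'a list"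
  have len: "length t = size M" if "t \<in> ?P" for t
    using that by (rule length_finite_permutations_of_multiset)
  have sw_nth: "sw t ! i = (if i = q then t ! 0 else if i = 0 then t ! q else t ! i)"
    if "i < length t" "q < length t" for t i
    using that unfolding sw_def by (auto simp: nth_list_update)
  have "sw (sw t) = t" "sw t \<in> ?P" "f (sw t ! q) = f (t ! 0)" if t: "t \<in> ?P" for t
  proof -
    have l: "0 < length t" "q < length t" using len[OF t] assms by auto
    have len_sw: "length (sw u) = length u" for u by (simp add: sw_def)
    show "sw (sw t) = t"
    proof (rule nth_equalityI)
      fix i assume "i < length (sw (sw t))"
      then have i: "i < length t" by (simp add: len_sw)
      show "sw (sw t) ! i = t ! i"
        using sw_nth[of i "sw t"] sw_nth[of i t] sw_nth[of 0 t] sw_nth[of q t] i l len_sw[of t]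
        by (auto split: if_splits)
    qed (simp add: len_sw)
    have "mset (sw t) = mset t" using mset_swap[of q t 0] l unfolding sw_def by simp
    then show "sw t \<in> ?P" using t by (simp add: permutations_of_multiset_def)
    show "f (sw t ! q) = f (t ! 0)" using l by (simp add: sw_nth)
  qed
  then show ?thesis by (intro sum.reindex_bij_witness[of _ sw sw]) auto
qed

lemma sum_permutations_of_multiset_hd:
  fixes f :: "'a \<Rightarrow> 'b::comm_semiring_1"
  assumes "M \<noteq> {#}"
  shows "of_nat (size M) * (\<Sum>t\<in>permutations_of_multiset M. f (hd t)) =
         of_nat (card (permutations_of_multiset M)) * (\<Sum>x\<in>#M. f x)"
proof -
  let ?P = "permutations_of_multiset M"
  have len: "length t = size M" if "t \<in> ?P" for t
    using that by (rule length_finite_permutations_of_multiset)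
  have hd: "hd t = t ! 0" if "t \<in> ?P" for t
    using len[OF that] assms by (cases t) auto
  have "of_nat (size M) * (\<Sum>t\<in>?P. f (hd t)) = (\<Sum>q<size M. \<Sum>t\<in>?P. f (t ! 0))"
    by (simp add: hd)
  also have "\<dots> = (\<Sum>q<size M. \<Sum>t\<in>?P. f (t ! q))"
    by (rule sum.cong[OF refl]) (simp add: sum_permutations_of_multiset_nth)
  also have "\<dots> = (\<Sum>t\<in>?P. \<Sum>q<size M. f (t ! q))" by (rule sum.swap)
  also have "\<dots> = (\<Sum>t\<in>?P. \<Sum>x\<in>#M. f x)"
  proof (rule sum.cong[OF refl])
    fix t assume t: "t \<in> ?P"
    have "(\<Sum>q<size M. f (t ! q)) = sum_list (map f t)"
      using len[OF t] by (simp add: sum_list_sum_nth atLeast0LessThan)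
    then show "(\<Sum>q<size M. f (t ! q)) = (\<Sum>x\<in>#M. f x)"
      using t by (simp add: sum_mset_sum_list[symmetric] permutations_of_multiset_def)
  qed
  finally show ?thesis by simp
qed

lemma leibniz_det_hd_rows_eq_0:
  fixes k :: "nat \<Rightarrow> nat \<Rightarrow> int" and d :: "'a \<Rightarrow> nat \<Rightarrow> int" and M :: "nat \<Rightarrow> 'a multiset"
  assumes nonempty: "\<exists>i<n. M i \<noteq> {#}"
    and balanced: "\<And>j. j < n \<Longrightarrow> (\<Sum>i<n. \<Sum>x\<in>#M i. d x j) = 0"
  shows "leibniz_det n (\<lambda>i j. \<Sum>t\<in>permutations_of_multiset (M i). if t = [] then k i j else d (hd t) j) = 0"
    (is "leibniz_det n ?R = 0")
proof -
  define P where "P i = permutations_of_multiset (M i)" for i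
  define v where "v i j = (\<Sum>x\<in>#M i. d x j)" for i j
  have row: "int (size (M i)) * ?R i j = int (card (P i)) * v i j" if "M i \<noteq> {#}" for i j
  proof -
    have "?R i j = (\<Sum>t\<in>P i. d (hd t) j)"
      by (rule sum.cong) (use that in \<open>auto simp: P_def permutations_of_multiset_def\<close>)
    then show ?thesis using sum_permutations_of_multiset_hd[OF that, of "\<lambda>x. d x j"] by (simp add: v_def P_def)
  qed
  \<comment> \<open>scaled by positive integers, each nonempty row \<open>i\<close> becomes \<open>v i\<close>; these rows sum to zero\<close>
  define a where "a i = (if M i = {#} then 1 else int (size (M i)))" for i
  define b where "b i = (if M i = {#} then 1 else int (card (P i)))" for i
  define R' where "R' i j = (if M i = {#} then ?R i j else v i j)" for i j
  have "leibniz_det n (\<lambda>i j. a i * ?R i j) = leibniz_det n (\<lambda>i j. b i * R' i j)"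
    by (rule leibniz_det_cong) (auto simp: a_def b_def R'_def row)
  then have eq: "(\<Prod>i<n. a i) * leibniz_det n ?R = (\<Prod>i<n. b i) * leibniz_det n R'"
    by (simp add: leibniz_det_scale_rows)
  have "leibniz_det n R' = 0"
  proof (rule leibniz_det_rows_sum_zero[of "{i. i < n \<and> M i \<noteq> {#}}"])
    show "{i. i < n \<and> M i \<noteq> {#}} \<noteq> {}" using nonempty by blast
    fix j assume "j < n"
    have "(\<Sum>i\<in>{i. i < n \<and> M i \<noteq> {#}}. R' i j) = (\<Sum>i\<in>{i. i < n \<and> M i \<noteq> {#}}. v i j)"
      by (rule sum.cong) (auto simp: R'_def)
    also have "\<dots> = (\<Sum>i<n. v i j)"
      by (rule sum.mono_neutral_left) (auto simp: v_def)
    finally show "(\<Sum>i\<in>{i. i < n \<and> M i \<noteq> {#}}. R' i j) = 0"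
      using balanced[OF \<open>j < n\<close>] by (simp add: v_def)
  qed auto
  moreover have "(\<Prod>i<n. a i) \<noteq> 0" by (auto simp: a_def)
  ultimately show ?thesis using eq by simp
qed

definition list_tuples_with_sum :: "(nat \<Rightarrow> 'a set) \<Rightarrow> nat \<Rightarrow> 'a::comm_monoid_add \<Rightarrow> (nat \<Rightarrow> 'a list) set" where
  "list_tuples_with_sum A n g = {\<tau> \<in> PiE {..<n} (\<lambda>i. lists (A i)). (\<Sum>i<n. sum_list (\<tau> i)) = g}"

definition msets_of :: "nat \<Rightarrow> (nat \<Rightarrow> 'a list) \<Rightarrow> nat \<Rightarrow> 'a multiset" where
  "msets_of n \<tau> i = (if i < n then mset (\<tau> i) else {#})"

lemma list_tuples_with_sum_eq_image:
  "list_tuples_with_sum A n g =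
     snd ` Sigma (tuples_with_sum (\<lambda>i. sums_of (A i)) n g) (\<lambda>b. PiE {..<n} (\<lambda>i. lists_with_sum (A i) (b i)))"
  (is "_ = snd ` ?\<Sigma>")
proof (intro equalityI subsetI)
  fix \<tau> assume "\<tau> \<in> list_tuples_with_sum A n g"
  then have \<tau>: "\<tau> \<in> PiE {..<n} (\<lambda>i. lists (A i))" "(\<Sum>i<n. sum_list (\<tau> i)) = g"
    by (auto simp: list_tuples_with_sum_def)
  let ?b = "restrict (\<lambda>i. sum_list (\<tau> i)) {..<n}"
  have "?b \<in> tuples_with_sum (\<lambda>i. sums_of (A i)) n g"
    using \<tau> by (auto simp: tuples_with_sum_def sums_of_def PiE_def Pi_def)
  moreover have "\<tau> \<in> PiE {..<n} (\<lambda>i. lists_with_sum (A i) (?b i))"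
    using \<tau>(1) by (auto simp: lists_with_sum_def PiE_def Pi_def)
  ultimately show "\<tau> \<in> snd ` ?\<Sigma>" by (intro image_eqI[of _ _ "(?b, \<tau>)"]) auto
next
  fix \<tau> assume "\<tau> \<in> snd ` ?\<Sigma>"
  then obtain b where b: "b \<in> tuples_with_sum (\<lambda>i. sums_of (A i)) n g"
    "\<tau> \<in> PiE {..<n} (\<lambda>i. lists_with_sum (A i) (b i))" by auto
  then have "(\<Sum>i<n. sum_list (\<tau> i)) = (\<Sum>i<n. b i)"
    by (intro sum.cong) (auto simp: lists_with_sum_def PiE_def Pi_def)
  then show "\<tau> \<in> list_tuples_with_sum A n g"
    using b by (auto simp: list_tuples_with_sum_def tuples_with_sum_def lists_with_sum_def PiE_def Pi_def)
qed

lemma inj_on_snd_tuples_with_sum: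
  "inj_on snd (Sigma (tuples_with_sum S n g) (\<lambda>b. PiE {..<n} (\<lambda>i. lists_with_sum (A i) (b i))))"
proof (rule inj_onI)
  fix p q
  assume p: "p \<in> Sigma (tuples_with_sum S n g) (\<lambda>b. PiE {..<n} (\<lambda>i. lists_with_sum (A i) (b i)))"
    and q: "q \<in> Sigma (tuples_with_sum S n g) (\<lambda>b. PiE {..<n} (\<lambda>i. lists_with_sum (A i) (b i)))"
    and eq: "snd p = snd q"
  have "fst p i = fst q i" for i
    using p q eq by (cases "i < n")
      (auto simp: tuples_with_sum_def lists_with_sum_def PiE_def Pi_def extensional_def)
  then show "p = q" using eq by (simp add: prod_eq_iff fun_eq_iff)
qed

lemma sum_prod_lists_with_sum:
  fixes X :: "nat \<Rightarrow> 'a::comm_monoid_add list \<Rightarrow> 'c::comm_semiring_1"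
  assumes fin: "\<And>i b. i < n \<Longrightarrow> finite (lists_with_sum (A i) b)"
    and finT: "finite (tuples_with_sum (\<lambda>i. sums_of (A i)) n g)"
  shows "(\<Sum>b\<in>tuples_with_sum (\<lambda>i. sums_of (A i)) n g. \<Prod>i<n. \<Sum>t\<in>lists_with_sum (A i) (b i). X i t) =
    (\<Sum>\<tau>\<in>list_tuples_with_sum A n g. \<Prod>i<n. X i (\<tau> i))"
proof -
  let ?T = "\<lambda>b. PiE {..<n} (\<lambda>i. lists_with_sum (A i) (b i))"
  have "(\<Sum>b\<in>tuples_with_sum (\<lambda>i. sums_of (A i)) n g. \<Prod>i<n. \<Sum>t\<in>lists_with_sum (A i) (b i). X i t) =
      (\<Sum>b\<in>tuples_with_sum (\<lambda>i. sums_of (A i)) n g. \<Sum>\<tau>\<in>?T b. \<Prod>i<n. X i (\<tau> i))"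
    by (rule sum.cong[OF refl], rule prod_sum_PiE) (use fin in auto)
  also have "\<dots> = (\<Sum>p\<in>Sigma (tuples_with_sum (\<lambda>i. sums_of (A i)) n g) ?T. \<Prod>i<n. X i (snd p i))"
    by (subst sum.Sigma) (use finT fin in \<open>auto intro: finite_PiE simp: split_def\<close>)
  also have "\<dots> = (\<Sum>\<tau>\<in>list_tuples_with_sum A n g. \<Prod>i<n. X i (\<tau> i))"
    unfolding list_tuples_with_sum_eq_image by (simp add: sum.reindex[OF inj_on_snd_tuples_with_sum])
  finally show ?thesis .
qed

lemma list_tuples_with_sum_fiber:
  assumes "\<tau>0 \<in> list_tuples_with_sum A n g"
  shows "{\<tau> \<in> list_tuples_with_sum A n g. msets_of n \<tau> = msets_of n \<tau>0} =
    PiE {..<n} (\<lambda>i. permutations_of_multiset (mset (\<tau>0 i)))"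
proof (intro equalityI subsetI)
  fix \<tau> assume "\<tau> \<in> {\<tau> \<in> list_tuples_with_sum A n g. msets_of n \<tau> = msets_of n \<tau>0}"
  then have "\<tau> \<in> PiE {..<n} (\<lambda>i. lists (A i))" "\<And>i. i < n \<Longrightarrow> mset (\<tau> i) = mset (\<tau>0 i)"
    by (auto simp: list_tuples_with_sum_def msets_of_def fun_eq_iff split: if_splits)
  then show "\<tau> \<in> PiE {..<n} (\<lambda>i. permutations_of_multiset (mset (\<tau>0 i)))"
    by (auto simp: PiE_def Pi_def permutations_of_multiset_def)
next
  fix \<tau> assume \<tau>: "\<tau> \<in> PiE {..<n} (\<lambda>i. permutations_of_multiset (mset (\<tau>0 i)))"
  then have ms: "mset (\<tau> i) = mset (\<tau>0 i)" if "i < n" for i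
    using that by (auto simp: PiE_def Pi_def permutations_of_multiset_def)
  have \<tau>0: "\<tau>0 \<in> PiE {..<n} (\<lambda>i. lists (A i))" "(\<Sum>i<n. sum_list (\<tau>0 i)) = g"
    using assms by (auto simp: list_tuples_with_sum_def)
  have "set (\<tau> i) \<subseteq> A i" if "i < n" for i
    using \<tau>0(1) ms[OF that] that by (auto simp: PiE_def Pi_def dest: mset_eq_setD)
  then have "\<tau> \<in> PiE {..<n} (\<lambda>i. lists (A i))" using \<tau> by (auto simp: PiE_def Pi_def)
  moreover have "(\<Sum>i<n. sum_list (\<tau> i)) = g"
    using \<tau>0(2) ms by (auto simp: sum_mset_sum_list[symmetric] intro: sum.cong)
  moreover have "msets_of n \<tau> = msets_of n \<tau>0" using ms by (auto simp: msets_of_def)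
  ultimately show "\<tau> \<in> {\<tau> \<in> list_tuples_with_sum A n g. msets_of n \<tau> = msets_of n \<tau>0}"
    by (simp add: list_tuples_with_sum_def)
qed

lemma sum_fiber_leibniz_det:
  fixes w :: "nat \<Rightarrow> 'a::comm_monoid_add list \<Rightarrow> 'k::field" and k :: "nat \<Rightarrow> nat \<Rightarrow> int"
    and d :: "'a \<Rightarrow> nat \<Rightarrow> int"
  assumes \<tau>0: "\<tau>0 \<in> list_tuples_with_sum A n g"
    and w_perm: "\<And>i t t'. i < n \<Longrightarrow> mset t = mset t' \<Longrightarrow> w i t = w i t'"
    and w_Nil: "\<And>i. w i [] = 1"
    and balanced: "\<And>j. j < n \<Longrightarrow> (\<Sum>i<n. \<Sum>x\<leftarrow>\<tau>0 i. d x j) = 0"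
  shows "(\<Sum>\<tau>\<in>{\<tau> \<in> list_tuples_with_sum A n g. msets_of n \<tau> = msets_of n \<tau>0}.
      (\<Prod>i<n. w i (\<tau> i)) * of_int (leibniz_det n (\<lambda>i j. if \<tau> i = [] then k i j else d (hd (\<tau> i)) j)))
    = (if msets_of n \<tau>0 = (\<lambda>_. {#}) then of_int (leibniz_det n k) else 0)"
proof -
  let ?P = "\<lambda>i. permutations_of_multiset (mset (\<tau>0 i))"
  let ?r = "\<lambda>i t j. if t = [] then k i j else d (hd t) j"
  have fiber: "{\<tau> \<in> list_tuples_with_sum A n g. msets_of n \<tau> = msets_of n \<tau>0} = PiE {..<n} ?P"
    by (rule list_tuples_with_sum_fiber[OF \<tau>0])
  have "(\<Prod>i<n. w i (\<tau> i)) = (\<Prod>i<n. w i (\<tau>0 i))" if "\<tau> \<in> PiE {..<n} ?P" for \<tau>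
  proof (rule prod.cong[OF refl])
    fix i assume "i \<in> {..<n}"
    then show "w i (\<tau> i) = w i (\<tau>0 i)"
      using that by (intro w_perm) (auto simp: PiE_def Pi_def permutations_of_multiset_def)
  qed
  then have "(\<Sum>\<tau>\<in>PiE {..<n} ?P. (\<Prod>i<n. w i (\<tau> i)) * of_int (leibniz_det n (\<lambda>i j. ?r i (\<tau> i) j)))
      = (\<Prod>i<n. w i (\<tau>0 i)) * of_int (\<Sum>\<tau>\<in>PiE {..<n} ?P. leibniz_det n (\<lambda>i j. ?r i (\<tau> i) j))"
    by (simp add: sum_distrib_left)
  also have "\<dots> = (\<Prod>i<n. w i (\<tau>0 i)) * of_int (leibniz_det n (\<lambda>i j. \<Sum>t\<in>?P i. ?r i t j))"
    by (subst leibniz_det_sum_PiE_rows) simp_all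
  also have "\<dots> = (if msets_of n \<tau>0 = (\<lambda>_. {#}) then of_int (leibniz_det n k) else 0)"
  proof (cases "msets_of n \<tau>0 = (\<lambda>_. {#})")
    case True
    then have nil: "\<tau>0 i = []" if "i < n" for i
      using that by (auto simp: msets_of_def fun_eq_iff split: if_splits)
    have "leibniz_det n (\<lambda>i j. \<Sum>t\<in>?P i. ?r i t j) = leibniz_det n (\<lambda>i j. k i j)"
      by (rule leibniz_det_cong) (simp add: nil)
    then show ?thesis using True nil w_Nil by simp
  next
    case False
    then have "\<exists>i<n. mset (\<tau>0 i) \<noteq> {#}" by (auto simp: msets_of_def fun_eq_iff split: if_splits)
    moreover have "(\<Sum>i<n. \<Sum>x\<in>#mset (\<tau>0 i). d x j) = 0" if "j < n" for j
    proof -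
      have "(\<Sum>x\<in>#mset t. d x j) = (\<Sum>x\<leftarrow>t. d x j)" for t by (induction t) auto
      then show ?thesis using balanced[OF that] by simp
    qed
    ultimately have "leibniz_det n (\<lambda>i j. \<Sum>t\<in>?P i. ?r i t j) = 0"
      by (rule leibniz_det_hd_rows_eq_0)
    then show ?thesis using False by simp
  qed
  finally show ?thesis by (simp only: fiber)
qed

theorem sum_list_tuples_leibniz_det:
  fixes w :: "nat \<Rightarrow> 'a::comm_monoid_add list \<Rightarrow> 'k::field" and k :: "nat \<Rightarrow> nat \<Rightarrow> int"
    and d :: "'a \<Rightarrow> nat \<Rightarrow> int"
  assumes fin: "finite (list_tuples_with_sum A n g)"
    and w_perm: "\<And>i t t'. i < n \<Longrightarrow> mset t = mset t' \<Longrightarrow> w i t = w i t'"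
    and w_Nil: "\<And>i. w i [] = 1"
    and balanced: "\<And>\<tau> j. \<tau> \<in> list_tuples_with_sum A n g \<Longrightarrow> j < n \<Longrightarrow> (\<Sum>i<n. \<Sum>x\<leftarrow>\<tau> i. d x j) = 0"
  shows "(\<Sum>\<tau>\<in>list_tuples_with_sum A n g.
      (\<Prod>i<n. w i (\<tau> i)) * of_int (leibniz_det n (\<lambda>i j. if \<tau> i = [] then k i j else d (hd (\<tau> i)) j)))
    = (if g = 0 then of_int (leibniz_det n k) else 0)"
proof -
  let ?C = "list_tuples_with_sum A n g"
  let ?\<Phi> = "\<lambda>\<tau>. (\<Prod>i<n. w i (\<tau> i)) * of_int (leibniz_det n (\<lambda>i j. if \<tau> i = [] then k i j else d (hd (\<tau> i)) j))"
  let ?E = "\<lambda>_. {#} :: 'a multiset"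
  have "(\<Sum>\<tau>\<in>?C. ?\<Phi> \<tau>) = (\<Sum>M\<in>msets_of n ` ?C. \<Sum>\<tau>\<in>{\<tau> \<in> ?C. msets_of n \<tau> = M}. ?\<Phi> \<tau>)"
    by (rule sum.image_gen[OF fin])
  also have "\<dots> = (\<Sum>M\<in>msets_of n ` ?C. if M = ?E then of_int (leibniz_det n k) else 0)"
  proof (rule sum.cong[OF refl])
    fix M assume "M \<in> msets_of n ` ?C"
    then obtain \<tau>0 where \<tau>0: "\<tau>0 \<in> ?C" "M = msets_of n \<tau>0" by blast
    show "(\<Sum>\<tau>\<in>{\<tau> \<in> ?C. msets_of n \<tau> = M}. ?\<Phi> \<tau>) = (if M = ?E then of_int (leibniz_det n k) else 0)"
      unfolding \<tau>0(2) by (rule sum_fiber_leibniz_det[where w = w and d = d, OF \<tau>0(1) w_perm w_Nil balanced[OF \<tau>0(1)]])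
  qed
  also have "\<dots> = (if ?E \<in> msets_of n ` ?C then of_int (leibniz_det n k) else 0)"
    by (rule sum.delta[OF finite_imageI[OF fin]])
  also have "?E \<in> msets_of n ` ?C \<longleftrightarrow> g = 0"
  proof
    assume "?E \<in> msets_of n ` ?C"
    then obtain \<tau> where \<tau>: "\<tau> \<in> ?C" "?E = msets_of n \<tau>" by (rule imageE)
    have "\<tau> i = []" if "i < n" for i
      using fun_cong[OF \<tau>(2), of i] that by (simp add: msets_of_def)
    then show "g = 0" using \<tau>(1) by (simp add: list_tuples_with_sum_def)
  next
    let ?\<tau> = "\<lambda>i. if i < n then [] else undefined"
    assume "g = 0"
    then have "?\<tau> \<in> ?C" by (simp add: list_tuples_with_sum_def PiE_def extensional_def)
    then have "msets_of n ?\<tau> \<in> msets_of n ` ?C" by (rule imageI)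
    moreover have "msets_of n ?\<tau> = ?E" by (simp add: msets_of_def fun_eq_iff)
    ultimately show "?E \<in> msets_of n ` ?C" by simp
  qed
  finally show ?thesis .
qed

lemma finite_list_tuples_with_sum:
  fixes A :: "nat \<Rightarrow> 'a::linordered_ab_group_add set"
  assumes "\<And>i. i < n \<Longrightarrow> A i \<subseteq> {a. 0 < a}" "\<And>i. i < n \<Longrightarrow> well_ordered (A i)"
  shows "finite (list_tuples_with_sum A n g)"
  unfolding list_tuples_with_sum_eq_image
proof (intro finite_imageI finite_SigmaI finite_PiE)
  show "finite (tuples_with_sum (\<lambda>i. sums_of (A i)) n g)"
    by (rule finite_tuples_with_sum) (simp add: assms neumann_well_ordered)
qed (simp_all add: assms finite_lists_with_sum)

section \<open>The residue formula\<close>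

lemma coef_prod_list: "coef (prod_list (map P xs)) = mn_prod (map (\<lambda>i. coef (P i)) xs)"
  by (induction xs) (simp_all add: mn_prod_def coef_one coef_mult)

lemma prod_monomial: "(\<Prod>i<(n::nat). monomial 1 (e i)) = monomial 1 (\<Sum>i<n. e i)"
  by (induction n) (simp_all add: monomial_one monomial_mult add.commute)

lemma prod_list_map_upt: "prod_list (map P [0..<n]) = (\<Prod>i<n. P i)"
  by (induction n) (simp_all add: mult.commute)

lemma mn_prod_mn_inv:
  assumes "\<And>i. i < n \<Longrightarrow> is_MN (F i) \<and> F i \<noteq> (\<lambda>_. 0)"
  shows "mn_prod (map (\<lambda>i. mn_inv (F i)) [0..<n]) = coef (\<Prod>i<n. inverse (Abs_mns (F i)))"
proof -
  have "mn_inv (F i) = coef (inverse (Abs_mns (F i)))" if "i < n" for i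
    using assms[OF that] mn_inv_coef[of "Abs_mns (F i)"] by (metis Abs_mns_inverse coef_zero mem_Collect_eq)
  then have "map (\<lambda>i. mn_inv (F i)) [0..<n] = map (\<lambda>i. coef (inverse (Abs_mns (F i)))) [0..<n]"
    by simp
  then show ?thesis by (simp only: coef_prod_list[symmetric] prod_list_map_upt)
qed

lemma mn_prod_mn_x: "mn_prod (map (mn_x eps) [0..<n]) = coef (\<Prod>i<n. monomial (1::'k::field) (eps i))"
proof -
  have "map (mn_x eps) [0..<n] = map (\<lambda>i. coef (monomial (1::'k) (eps i))) [0..<n]"
    by (simp add: mn_x_def monomial.rep_eq fun_eq_iff)
  then show ?thesis by (simp only: coef_prod_list[symmetric] prod_list_map_upt)
qed

context decomposed_group
begin

lemma jac_eq_coef: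
  assumes "\<And>i. i < n \<Longrightarrow> is_MN (F i)"
  shows "jac G n eps F =
    coef (\<Sum>p\<in>{p. p permutes {..<n}}. of_int (sign p) * (\<Prod>i<n. partial (p i) (Abs_mns (F i))))"
proof
  fix x
  have "mn_prod (map (\<lambda>i. mn_deriv G n eps (p i) (F i)) [0..<n]) = coef (\<Prod>i<n. partial (p i) (Abs_mns (F i)))" for p
  proof -
    have "map (\<lambda>i. mn_deriv G n eps (p i) (F i)) [0..<n] = map (\<lambda>i. coef (partial (p i) (Abs_mns (F i)))) [0..<n]"
      using assms by (simp add: partial.rep_eq Abs_mns_inverse)
    then show ?thesis by (simp only: coef_prod_list[symmetric] prod_list_map_upt)
  qed
  then show "jac G n eps F x =
      coef (\<Sum>p\<in>{p. p permutes {..<n}}. of_int (sign p) * (\<Prod>i<n. partial (p i) (Abs_mns (F i)))) x"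
    unfolding jac_def by (simp add: coef_sum coef_of_int_mult)
qed

lemma monomials_mult_inverse_jacobian:
  fixes f :: "nat \<Rightarrow> ('a, 'k::field) mns"
  shows "(\<Prod>i<n. monomial 1 (eps i)) * ((\<Prod>i<n. inverse (f i)) *
      (\<Sum>p\<in>{p. p permutes {..<n}}. of_int (sign p) * (\<Prod>i<n. partial (p i) (f i)))) =
    (\<Sum>p\<in>{p. p permutes {..<n}}. of_int (sign p) * (\<Prod>i<n. euler (p i) (f i) * inverse (f i)))"
proof -
  have "(\<Prod>i<n. monomial 1 (eps i)) * (\<Prod>i<n. inverse (f i)) * (\<Prod>i<n. partial (p i) (f i)) =
      (\<Prod>i<n. euler (p i) (f i) * inverse (f i))" if p: "p permutes {..<n}" for p
  proof -
    have "(\<Prod>i<n. monomial 1 (eps i)) = (\<Prod>i<n. monomial (1::'k) (eps (p i)))"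
      using prod.permute[OF p, of "\<lambda>i. monomial 1 (eps i)"] by (simp add: comp_def)
    then show ?thesis by (simp add: prod.distrib monomial_mult_partial[symmetric] ac_simps)
  qed
  then show ?thesis by (simp add: sum_distrib_left ac_simps)
qed

lemma coef_prod_euler_div:
  fixes f :: "nat \<Rightarrow> ('a, 'k::field) mns"
  assumes fac: "\<And>i. i < n \<Longrightarrow> c i \<noteq> 0 \<and> is_MN (h i) \<and> supp (h i) \<subseteq> {a. 0 < a} \<and>
      f i = monomial (c i) (mn_ord (coef (f i))) * (1 + Abs_mns (h i))"
  shows "coef (\<Prod>i<n. euler (p i) (f i) * inverse (f i)) g =
    (\<Sum>\<tau>\<in>list_tuples_with_sum (\<lambda>i. supp (h i)) n g. \<Prod>i<n. neumann_weight (h i) (\<tau> i) *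
       of_int (if \<tau> i = [] then xd (mn_ord (coef (f i))) (p i) else xd (hd (\<tau> i)) (p i)))"
proof -
  let ?A = "\<lambda>i. supp (h i)"
  let ?r = "\<lambda>i t j. if t = [] then xd (mn_ord (coef (f i))) j else xd (hd t) j"
  have A: "?A i \<subseteq> {a. 0 < a}" "well_ordered (?A i)" if "i < n" for i
    using fac[OF that] by (simp_all add: is_MN_iff_well_ordered)
  have coef_L: "coef (euler j (f i) * inverse (f i)) b =
      (\<Sum>t\<in>lists_with_sum (?A i) b. neumann_weight (h i) t * of_int (?r i t j))" if "i < n" for i j b
    by (rule coef_euler_div[where c = "c i"]) (use fac[OF that] in simp_all)
  have supp_L: "supp (coef (euler j (f i) * inverse (f i))) \<subseteq> sums_of (?A i)" if "i < n" for i j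
  proof
    fix b assume "b \<in> supp (coef (euler j (f i) * inverse (f i)))"
    then have "lists_with_sum (?A i) b \<noteq> {}" using coef_L[OF that] by (auto simp: supp_def)
    then show "b \<in> sums_of (?A i)" unfolding lists_with_sum_def sums_of_def by blast
  qed
  have "coef (\<Prod>i<n. euler (p i) (f i) * inverse (f i)) g =
      (\<Sum>b\<in>tuples_with_sum (\<lambda>i. sums_of (?A i)) n g. \<Prod>i<n. coef (euler (p i) (f i) * inverse (f i)) (b i))"
    by (rule coef_prod) (simp_all add: A neumann_well_ordered supp_L)
  also have "\<dots> = (\<Sum>b\<in>tuples_with_sum (\<lambda>i. sums_of (?A i)) n g.
      \<Prod>i<n. \<Sum>t\<in>lists_with_sum (?A i) (b i). neumann_weight (h i) t * of_int (?r i t (p i)))"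
    by (intro sum.cong refl prod.cong) (simp add: coef_L)
  also have "\<dots> = (\<Sum>\<tau>\<in>list_tuples_with_sum ?A n g.
      \<Prod>i<n. neumann_weight (h i) (\<tau> i) * of_int (?r i (\<tau> i) (p i)))"
    by (rule sum_prod_lists_with_sum)
      (simp_all add: A finite_lists_with_sum finite_tuples_with_sum neumann_well_ordered)
  finally show ?thesis .
qed

lemma coef_log_jacobian:
  fixes f :: "nat \<Rightarrow> ('a, 'k::field) mns"
  assumes nonzero: "\<And>i. i < n \<Longrightarrow> f i \<noteq> 0" and g: "g \<in> G"
  shows "coef (\<Sum>p\<in>{p. p permutes {..<n}}. of_int (sign p) * (\<Prod>i<n. euler (p i) (f i) * inverse (f i))) g =
    (if g = 0 then of_int (leibniz_det n (\<lambda>i j. xd (mn_ord (coef (f i))) j)) else 0)"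
proof -
  have "\<forall>i. \<exists>ch. i < n \<longrightarrow> fst ch \<noteq> 0 \<and> is_MN (snd ch) \<and> supp (snd ch) \<subseteq> {a. 0 < a} \<and>
      f i = monomial (fst ch) (mn_ord (coef (f i))) * (1 + Abs_mns (snd ch))"
    by (metis mns_factor nonzero fst_conv snd_conv)
  then obtain ch where ch: "\<And>i. i < n \<Longrightarrow> fst (ch i) \<noteq> 0 \<and> is_MN (snd (ch i)) \<and>
      supp (snd (ch i)) \<subseteq> {a. 0 < a} \<and> f i = monomial (fst (ch i)) (mn_ord (coef (f i))) * (1 + Abs_mns (snd (ch i)))"
    by metis
  define A where "A i = supp (snd (ch i))" for i
  define w where "w i t = neumann_weight (snd (ch i)) t" for i t
  let ?C = "list_tuples_with_sum A n g"
  have "coef (\<Sum>p\<in>{p. p permutes {..<n}}. of_int (sign p) * (\<Prod>i<n. euler (p i) (f i) * inverse (f i))) g =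
      (\<Sum>\<tau>\<in>?C. (\<Prod>i<n. w i (\<tau> i)) *
         of_int (leibniz_det n (\<lambda>i j. if \<tau> i = [] then xd (mn_ord (coef (f i))) j else xd (hd (\<tau> i)) j)))"
    using coef_prod_euler_div[where c = "\<lambda>i. fst (ch i)" and h = "\<lambda>i. snd (ch i)", OF ch]
    by (simp add: A_def[abs_def] w_def coef_sum coef_of_int_mult leibniz_det_def prod.distrib
        sum_distrib_left sum.swap[of _ "{p. p permutes {..<n}}"] algebra_simps)
  also have "\<dots> = (if g = 0 then of_int (leibniz_det n (\<lambda>i j. xd (mn_ord (coef (f i))) j)) else 0)"
  proof (rule sum_list_tuples_leibniz_det)
    show "finite ?C"
      by (rule finite_list_tuples_with_sum) (simp_all add: A_def ch is_MN_iff_well_ordered[symmetric])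
    show "w i t = w i t'" if "mset t = mset t'" for i t t'
      unfolding w_def by (rule neumann_weight_mset[OF that])
    show "w i [] = 1" for i by (simp add: w_def neumann_weight_def)
    fix \<tau> j assume "\<tau> \<in> ?C"
    then have "(\<Sum>i<n. sum_list (\<tau> i)) = g" by (simp add: list_tuples_with_sum_def)
    then show "(\<Sum>i<n. \<Sum>x\<leftarrow>\<tau> i. xd x j) = 0"
      using fun_cong[OF xd_sum[of "\<lambda>i. sum_list (\<tau> i)" "{..<n}"], of j] xd_in_G[OF g]
      by (simp add: xd_sum_list)
  qed
  finally show ?thesis .
qed

end

theorem mainTheorem10:
  fixes G :: "'a::linordered_ab_group_add set" and n :: nat and eps :: "nat \<Rightarrow> 'a"
    and F :: "nat \<Rightarrow> 'a \<Rightarrow> 'k::field"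
  assumes "direct_sum_decomp G n eps"
    and "\<forall>i<n. is_MN (F i) \<and> F i \<noteq> (\<lambda>_. 0)"
  shows "Res G n eps (mn_mult (mn_prod (map (\<lambda>i. mn_inv (F i)) [0..<n])) (jac G n eps F))
           = (\<lambda>\<gamma>. if \<gamma> = 0 then of_int (jdet G n eps F) else 0)
         \<and> CT G (LJ G n eps F) = (\<lambda>\<gamma>. if \<gamma> = 0 then of_int (jdet G n eps F) else 0)"
proof -
  interpret decomposed_group G n eps by (rule decomposed_group.intro) (rule assms(1))
  define f :: "nat \<Rightarrow> ('a, 'k) mns" where "f i = Abs_mns (F i)" for i
  have coef_f: "coef (f i) = F i" if "i < n" for i
    using assms(2) that by (simp add: f_def Abs_mns_inverse)
  have f0: "f i \<noteq> 0" if "i < n" for i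
    using coef_f[OF that] assms(2) that by (metis coef_zero)
  define X where "X = (\<Prod>i<n. monomial (1::'k) (eps i))"
  define Y where "Y = (\<Prod>i<n. inverse (f i)) *
    (\<Sum>p\<in>{p. p permutes {..<n}}. of_int (sign p) * (\<Prod>i<n. partial (p i) (f i)))"
  have Y: "mn_mult (mn_prod (map (\<lambda>i. mn_inv (F i)) [0..<n])) (jac G n eps F) = coef Y"
    using assms(2) by (simp add: Y_def coef_mult mn_prod_mn_inv jac_eq_coef f_def)
  have XY: "LJ G n eps F = coef (X * Y)"
    by (simp add: LJ_def Y[symmetric] coef_mult X_def mn_prod_mn_x)
  have jdet: "jdet G n eps F = leibniz_det n (\<lambda>i j. xd (mn_ord (coef (f i))) j)"
    unfolding jdet_def leibniz_det_eq_det[symmetric]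
    by (rule leibniz_det_cong) (simp add: coef_f assms(2) x_init_exp_eq)
  have "coef (X * Y) g = (if g = 0 then of_int (jdet G n eps F) else 0)" if "g \<in> G" for g
    unfolding X_def Y_def monomials_mult_inverse_jacobian jdet by (rule coef_log_jacobian[OF f0 that])
  then have CT: "CT G (coef (X * Y)) = (\<lambda>\<gamma>. if \<gamma> = 0 then of_int (jdet G n eps F) else 0)"
    using zero_in_G by (auto simp: CT_def)
  have shift: "coef Y (g + hvec n eps (\<lambda>i. if i < n then -1 else 0)) = coef (X * Y) g" for g
    by (simp add: X_def prod_monomial coef_monomial_mult hvec_minus_one)
  have "Res G n eps (coef Y) = CT G (coef (X * Y))"
    by (simp only: Res_def CT_def shift)
  then show ?thesis by (simp add: Y XY CT)
qed

end
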